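(* Let $\mathsf{PA}^-$ be the theory of the non-negative parts of discretely ordered commutative rings, and let $T$ be $\mathsf{PA}^-$ together with all universal sentences (in the language $0,1,+,\cdot,\leq$) that are true in $\mathbb N$. Using the Markov coding of sequences (ur-strings) described in the context, and coding Hilbert-style proofs of the theory $\mathsf{BeSh}$ by such ur-strings, $T$ does not prove the sentence $\mathsf{con}(\mathsf{BeSh})$.
   Context: The theory $\mathsf{BeSh}$: its language consists of exactly two sentences, $\bot$ and $(\bot\to\bot)$; its only axiom is $(\bot\to\bot)$; its only rule is Modus Ponens (from $\bot$ and $(\bot\to\bot)$ infer $\bot$). A Hilbert-style proof is a finite sequence of sentences in which each occurrence is either an axiom or follows by Modus Ponens from two strictly earlier occurrences. Fix Gödel numbers $\ulcorner\bot\urcorner$ and $\ulcorner\bot\to\bot\urcorner$, which are distinct positive natural numbers. Markov coding. For a discretely ordered commutative ring $\mathcal R$ with non-negative part $\mathcal R^+$, let $\mathsf{SL}_2(\mathcal R^+)$ be the monoid (under matrix multiplication) of $2\times 2$ matrices with entries in $\mathcal R^+$ and determinant $1$; in a model of $\mathsf{PA}^-$ such matrices are represented by quadruples of elements, and quantifiers over matrices range over such quadruples. Write $\alpha_{ij}$ ($i,j\in\{0,1\}$) for the entries. Let $\mathtt A=\begin{pmatrix}1&1\\0&1\end{pmatrix}$, $\mathtt B=\begin{pmatrix}1&0\\1&1\end{pmatrix}$, and for a number $n$ let $[n]:=\mathtt B\mathtt A^n=\begin{pmatrix}1&n\\1&n+1\end{pmatrix}$. Define: $\alpha\le\beta$ iff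 $\alpha_{ij}\le\beta_{ij}$ for all $i,j$, and $\alpha<\beta$ iff $\alpha\le\beta$ and $\alpha\ne\beta$; $\alpha\preceq_{\mathsf i}\beta$ iff $\alpha^{-1}\beta$ has non-negative entries (i.e. $\alpha_{11}\beta_{00}\ge\alpha_{01}\beta_{10}$, $\alpha_{11}\beta_{01}\ge\alpha_{01}\beta_{11}$, $\alpha_{00}\beta_{10}\ge\alpha_{10}\beta_{00}$, $\alpha_{00}\beta_{11}\ge\alpha_{10}\beta_{01}$), and $\alpha\preceq_{\mathsf e}\beta$ iff $\beta\alpha^{-1}$ has non-negative entries; $\mathsf{ur}(\alpha)$ iff $\alpha$ is the identity matrix or $\mathtt B\preceq_{\mathsf i}\alpha$; $\alpha\preceq^{\mathsf u}_{\mathsf i}\beta$ iff $\alpha\preceq_{\mathsf i}\beta\wedge\mathsf{ur}(\alpha)\wedge\mathsf{ur}(\alpha^{-1}\beta)$, and $\alpha\preceq^{\mathsf u}_{\mathsf e}\beta$ iff $\alpha\preceq_{\mathsf e}\beta\wedge\mathsf{ur}(\alpha)\wedge\mathsf{ur}(\beta\alpha^{-1})$; $\mathsf{occ}(\alpha,n,\beta)$ iff $\alpha\preceq^{\mathsf u}_{\mathsf i}\beta\wedge[n]\preceq^{\mathsf u}_{\mathsf e}\alpha$. $\mathsf{proof}_0(\pi)$ is the formula: $\mathsf{ur}(\pi)\wedge\forall\alpha\le\pi\,\forall n\le\alpha_{01}\,(\mathsf{occ}(\alpha,n,\pi)\to(n=\ulcorner\bot\to\bot\urcorner\vee n=\ulcorner\bot\urcorner))\wedge\forall\alpha\le\pi\,(\mathsf{occ}(\alpha,\ulcorner\bot\urcorner,\pi)\to\exists\beta<\alpha\,\exists\gamma<\alpha\,(\mathsf{occ}(\beta,\ulcorner\bot\urcorner,\alpha)\wedge\mathsf{occ}(\gamma,\ulcorner\bot\to\bot\urcorner,\alpha)))$.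 $\mathsf{proof}(\pi,n)$ iff $\mathsf{proof}_0(\pi)\wedge[n]\preceq_{\mathsf e}\pi$. Finally $\mathsf{con}(\mathsf{BeSh})$ is $\forall\pi\,\neg\mathsf{proof}(\pi,\ulcorner\bot\urcorner)$. *)

theory Defs
  imports Main
begin

datatype trm = Var nat | Zero | One | Plus trm trm | Times trm trm

datatype fm = Eq trm trm | Leq trm trm | Neg fm | Conj fm fm | Disj fm fm
  | Imp fm fm | All nat fm | Ex nat fm

record 'a struc =
  zr :: 'a
  on :: 'a
  ad :: "'a \<Rightarrow> 'a \<Rightarrow> 'a"
  mu :: "'a \<Rightarrow> 'a \<Rightarrow> 'a"
  lq :: "'a \<Rightarrow> 'a \<Rightarrow> bool"

fun evt :: "'a struc \<Rightarrow> (nat \<Rightarrow> 'a) \<Rightarrow> trm \<Rightarrow> 'a" where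
  "evt M e (Var i) = e i"
| "evt M e Zero = zr M"
| "evt M e One = on M"
| "evt M e (Plus s t) = ad M (evt M e s) (evt M e t)"
| "evt M e (Times s t) = mu M (evt M e s) (evt M e t)"

fun sat :: "'a struc \<Rightarrow> (nat \<Rightarrow> 'a) \<Rightarrow> fm \<Rightarrow> bool" where
  "sat M e (Eq s t) = (evt M e s = evt M e t)"
| "sat M e (Leq s t) = lq M (evt M e s) (evt M e t)"
| "sat M e (Neg p) = (\<not> sat M e p)"
| "sat M e (Conj p q) = (sat M e p \<and> sat M e q)"
| "sat M e (Disj p q) = (sat M e p \<or> sat M e q)"
| "sat M e (Imp p q) = (sat M e p \<longrightarrow> sat M e q)"
| "sat M e (All x p) = (\<forall>a. sat M (e(x := a)) p)"
| "sat M e (Ex x p) = (\<exists>a. sat M (e(x := a)) p)"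

fun fvt :: "trm \<Rightarrow> nat set" where
  "fvt (Var i) = {i}"
| "fvt Zero = {}"
| "fvt One = {}"
| "fvt (Plus s t) = fvt s \<union> fvt t"
| "fvt (Times s t) = fvt s \<union> fvt t"

fun fv :: "fm \<Rightarrow> nat set" where
  "fv (Eq s t) = fvt s \<union> fvt t"
| "fv (Leq s t) = fvt s \<union> fvt t"
| "fv (Neg p) = fv p"
| "fv (Conj p q) = fv p \<union> fv q"
| "fv (Disj p q) = fv p \<union> fv q"
| "fv (Imp p q) = fv p \<union> fv q"
| "fv (All x p) = fv p - {x}"
| "fv (Ex x p) = fv p - {x}"

fun qfree :: "fm \<Rightarrow> bool" where
  "qfree (Eq s t) = True"
| "qfree (Leq s t) = True"
| "qfree (Neg p) = qfree p"
| "qfree (Conj p q) = (qfree p \<and> qfree q)"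
| "qfree (Disj p q) = (qfree p \<and> qfree q)"
| "qfree (Imp p q) = (qfree p \<and> qfree q)"
| "qfree (All x p) = False"
| "qfree (Ex x p) = False"

inductive universal :: "fm \<Rightarrow> bool" where
  "qfree p \<Longrightarrow> universal p"
| "universal p \<Longrightarrow> universal (All x p)"

definition sentence :: "fm \<Rightarrow> bool" where
  "sentence p \<longleftrightarrow> fv p = {}"

definition holds :: "'a struc \<Rightarrow> fm \<Rightarrow> bool" where
  "holds M p \<longleftrightarrow> (\<forall>e. sat M e p)"

definition Nstd :: "nat struc" where
  "Nstd = \<lparr>zr = 0, on = 1, ad = (+), mu = (*), lq = (\<le>)\<rparr>"

definition lt :: "'a struc \<Rightarrow> 'a \<Rightarrow> 'a \<Rightarrow> bool" where
  "lt M x y \<longleftrightarrow> lq M x y \<and> x \<noteq> y"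

definition PAminus :: "'a struc \<Rightarrow> bool" where
  "PAminus M \<longleftrightarrow>
    (\<forall>x y z. ad M (ad M x y) z = ad M x (ad M y z)) \<and>
    (\<forall>x y. ad M x y = ad M y x) \<and>
    (\<forall>x y z. mu M (mu M x y) z = mu M x (mu M y z)) \<and>
    (\<forall>x y. mu M x y = mu M y x) \<and>
    (\<forall>x y z. mu M x (ad M y z) = ad M (mu M x y) (mu M x z)) \<and>
    (\<forall>x. ad M x (zr M) = x) \<and>
    (\<forall>x. mu M x (zr M) = zr M) \<and>
    (\<forall>x. mu M x (on M) = x) \<and>
    (\<forall>x. lq M x x) \<and>
    (\<forall>x y. lq M x y \<and> lq M y x \<longrightarrow> x = y) \<and>
    (\<forall>x y z. lq M x y \<and> lq M y z \<longrightarrow> lq M x z) \<and>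
    (\<forall>x y. lq M x y \<or> lq M y x) \<and>
    (\<forall>x y z. lt M x y \<longrightarrow> lt M (ad M x z) (ad M y z)) \<and>
    (\<forall>x y z. lt M (zr M) z \<and> lt M x y \<longrightarrow> lt M (mu M x z) (mu M y z)) \<and>
    (\<forall>x y. lq M x y \<longrightarrow> (\<exists>z. ad M x z = y)) \<and>
    lt M (zr M) (on M) \<and>
    (\<forall>x. lq M (zr M) x) \<and>
    (\<forall>x. lt M (zr M) x \<longrightarrow> lq M (on M) x)"

definition model_T :: "'a struc \<Rightarrow> bool" where
  "model_T M \<longleftrightarrow> PAminus M \<and>
     (\<forall>p. universal p \<and> sentence p \<and> holds Nstd p \<longrightarrow> holds M p)"

fun numM :: "'a struc \<Rightarrow> nat \<Rightarrow> 'a" where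
  "numM M 0 = zr M"
| "numM M (Suc k) = ad M (numM M k) (on M)"

datatype 'a m2 = M2 (e00: 'a) (e01: 'a) (e10: 'a) (e11: 'a)

definition sl2 :: "'a struc \<Rightarrow> 'a m2 \<Rightarrow> bool" where
  "sl2 M a \<longleftrightarrow> mu M (e00 a) (e11 a) = ad M (mu M (e01 a) (e10 a)) (on M)"

definition mmul :: "'a struc \<Rightarrow> 'a m2 \<Rightarrow> 'a m2 \<Rightarrow> 'a m2" where
  "mmul M a b = M2
     (ad M (mu M (e00 a) (e00 b)) (mu M (e01 a) (e10 b)))
     (ad M (mu M (e00 a) (e01 b)) (mu M (e01 a) (e11 b)))
     (ad M (mu M (e10 a) (e00 b)) (mu M (e11 a) (e10 b)))
     (ad M (mu M (e10 a) (e01 b)) (mu M (e11 a) (e11 b)))"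

definition mle :: "'a struc \<Rightarrow> 'a m2 \<Rightarrow> 'a m2 \<Rightarrow> bool" where
  "mle M a b \<longleftrightarrow> lq M (e00 a) (e00 b) \<and> lq M (e01 a) (e01 b) \<and>
                  lq M (e10 a) (e10 b) \<and> lq M (e11 a) (e11 b)"

definition mlt :: "'a struc \<Rightarrow> 'a m2 \<Rightarrow> 'a m2 \<Rightarrow> bool" where
  "mlt M a b \<longleftrightarrow> mle M a b \<and> a \<noteq> b"

text \<open>alpha^{-1} beta has non-negative entries.\<close>
definition prec_i :: "'a struc \<Rightarrow> 'a m2 \<Rightarrow> 'a m2 \<Rightarrow> bool" where
  "prec_i M a b \<longleftrightarrow>
     lq M (mu M (e01 a) (e10 b)) (mu M (e11 a) (e00 b)) \<and>
     lq M (mu M (e01 a) (e11 b)) (mu M (e11 a) (e01 b)) \<and>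
     lq M (mu M (e10 a) (e00 b)) (mu M (e00 a) (e10 b)) \<and>
     lq M (mu M (e10 a) (e01 b)) (mu M (e00 a) (e11 b))"

text \<open>beta alpha^{-1} has non-negative entries.\<close>
definition prec_e :: "'a struc \<Rightarrow> 'a m2 \<Rightarrow> 'a m2 \<Rightarrow> bool" where
  "prec_e M a b \<longleftrightarrow>
     lq M (mu M (e01 b) (e10 a)) (mu M (e00 b) (e11 a)) \<and>
     lq M (mu M (e00 b) (e01 a)) (mu M (e01 b) (e00 a)) \<and>
     lq M (mu M (e11 b) (e10 a)) (mu M (e10 b) (e11 a)) \<and>
     lq M (mu M (e10 b) (e01 a)) (mu M (e11 b) (e00 a))"

definition idM :: "'a struc \<Rightarrow> 'a m2" where
  "idM M = M2 (on M) (zr M) (zr M) (on M)"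

definition matB :: "'a struc \<Rightarrow> 'a m2" where
  "matB M = M2 (on M) (zr M) (on M) (on M)"

definition ur :: "'a struc \<Rightarrow> 'a m2 \<Rightarrow> bool" where
  "ur M a \<longleftrightarrow> a = idM M \<or> prec_i M (matB M) a"

text \<open>The matrix alpha^{-1} beta (resp. beta alpha^{-1}) is the unique gamma in SL_2(M)
  with alpha gamma = beta (resp. gamma alpha = beta).\<close>
definition prec_iu :: "'a struc \<Rightarrow> 'a m2 \<Rightarrow> 'a m2 \<Rightarrow> bool" where
  "prec_iu M a b \<longleftrightarrow> prec_i M a b \<and> ur M a \<and>
     (\<exists>g. sl2 M g \<and> mmul M a g = b \<and> ur M g)"

definition prec_eu :: "'a struc \<Rightarrow> 'a m2 \<Rightarrow> 'a m2 \<Rightarrow> bool" where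
  "prec_eu M a b \<longleftrightarrow> prec_e M a b \<and> ur M a \<and>
     (\<exists>g. sl2 M g \<and> mmul M g a = b \<and> ur M g)"

definition brk :: "'a struc \<Rightarrow> 'a \<Rightarrow> 'a m2" where
  "brk M n = M2 (on M) n (on M) (ad M n (on M))"

definition occ :: "'a struc \<Rightarrow> 'a m2 \<Rightarrow> 'a \<Rightarrow> 'a m2 \<Rightarrow> bool" where
  "occ M a n b \<longleftrightarrow> prec_iu M a b \<and> prec_eu M (brk M n) a"

definition proof0 :: "'a struc \<Rightarrow> nat \<Rightarrow> nat \<Rightarrow> 'a m2 \<Rightarrow> bool" where
  "proof0 M gbot gimp p \<longleftrightarrow> ur M p \<and>
     (\<forall>a. sl2 M a \<and> mle M a p \<longrightarrow>
        (\<forall>n. lq M n (e01 a) \<longrightarrow> occ M a n p \<longrightarrow> n = numM M gimp \<or> n = numM M gbot)) \<and>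
     (\<forall>a. sl2 M a \<and> mle M a p \<longrightarrow> occ M a (numM M gbot) p \<longrightarrow>
        (\<exists>b. sl2 M b \<and> mlt M b a \<and> (\<exists>c. sl2 M c \<and> mlt M c a \<and>
            occ M b (numM M gbot) a \<and> occ M c (numM M gimp) a)))"

definition isproof :: "'a struc \<Rightarrow> nat \<Rightarrow> nat \<Rightarrow> 'a m2 \<Rightarrow> 'a \<Rightarrow> bool" where
  "isproof M gbot gimp p n \<longleftrightarrow> proof0 M gbot gimp p \<and> prec_e M (brk M n) p"

definition con_BeSh :: "'a struc \<Rightarrow> nat \<Rightarrow> nat \<Rightarrow> bool" where
  "con_BeSh M gbot gimp \<longleftrightarrow> (\<forall>p. sl2 M p \<longrightarrow> \<not> isproof M gbot gimp p (numM M gbot))"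

end

theory Submission
  imports Defs "HOL-Library.Countable_Set" Complex_Main
begin

text \<open>For a nonstandard \<open>n\<close>, the code \<open>\<pi>\<close> of \<open>(\<bottom>\<rightarrow>\<bottom>)\<^bsup>\<alpha>n\<^esup> \<bottom>\<^bsup>\<beta>n\<^esup>\<close> is a proof of \<open>\<bottom>\<close> in a
  suitable model of \<open>T\<close>, although its first \<open>\<bottom>\<close> is not justified by Modus Ponens: the model
  simply does not contain the prefix ending there.

  The model consists of the functions of \<open>n\<close> generated from the four entries of the code of
  \<open>\<pi>\<close> by \<open>+\<close>, \<open>\<times>\<close> and truncated subtraction, modulo eventual equality.  The entries of powers
  of a block matrix \<open>[l]\<close> are linear combinations of powers of its eigenvalues, so every element is
  eventually an exponential polynomial \<open>\<Sum> a\<^sub>r r\<^sup>n\<close> whose bases \<open>r\<close> lie in the group generated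
  by the products \<open>\<mu>\<^sub>C\<^sup>\<plusminus>\<^sup>1 \<mu>\<^sub>J\<^sup>\<plusminus>\<^sup>1\<close> of eigenvalues of the two block powers.  Such functions have
  eventually constant sign, hence the eventual order is linear, quantifier-free formulas are
  eventually decided, and every universal sentence true in \<open>\<nat>\<close> holds in the model.

  In the model every occurrence of \<open>\<bottom>\<close> in \<open>\<pi>\<close> is the prefix ending in its \<open>j\<close>-th \<open>\<bottom>\<close>, and \<open>j = 1\<close>
  would put the code of \<open>(\<bottom>\<rightarrow>\<bottom>)\<^bsup>\<alpha>n\<^esup>\<close>, with a term \<open>\<mu>\<^sub>C\<^sup>n\<close>, into the model.  Choosing \<open>\<alpha>, \<beta>\<close>
  so that \<open>\<mu>\<^sub>C\<close> is not in that group excludes this, so every \<open>\<bottom>\<close> is preceded by another \<open>\<bottom>\<close>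
  (drop the last block) and by \<open>\<bottom>\<rightarrow>\<bottom>\<close> (the first block).\<close>


section \<open>Matrices over the natural numbers and words in A and B\<close>

definition matmul :: "nat m2 \<Rightarrow> nat m2 \<Rightarrow> nat m2" where
  "matmul a b = M2 (e00 a * e00 b + e01 a * e10 b) (e00 a * e01 b + e01 a * e11 b)
                   (e10 a * e00 b + e11 a * e10 b) (e10 a * e01 b + e11 a * e11 b)"

definition unimodular :: "nat m2 \<Rightarrow> bool" where
  "unimodular a \<longleftrightarrow> e00 a * e11 a = e01 a * e10 a + 1"

definition mat_I :: "nat m2" where "mat_I = M2 1 0 0 1"
definition mat_A :: "nat m2" where "mat_A = M2 1 1 0 1"
definition mat_B :: "nat m2" where "mat_B = M2 1 0 1 1"

lemma idM_Nstd: "idM Nstd = mat_I"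
  by (simp add: idM_def Nstd_def mat_I_def)

lemma matB_Nstd: "matB Nstd = mat_B"
  by (simp add: matB_def Nstd_def mat_B_def)

lemma prec_e_Nstd: "prec_e Nstd a b \<longleftrightarrow>
     e01 b * e10 a \<le> e00 b * e11 a \<and> e00 b * e01 a \<le> e01 b * e00 a \<and>
     e11 b * e10 a \<le> e10 b * e11 a \<and> e10 b * e01 a \<le> e11 b * e00 a"
  by (simp add: prec_e_def Nstd_def)

lemma prec_i_Nstd: "prec_i Nstd a b \<longleftrightarrow>
     e01 a * e10 b \<le> e11 a * e00 b \<and> e01 a * e11 b \<le> e11 a * e01 b \<and>
     e10 a * e00 b \<le> e00 a * e10 b \<and> e10 a * e01 b \<le> e00 a * e11 b"
  by (simp add: prec_i_def Nstd_def)

lemma ur_Nstd: "ur Nstd a \<longleftrightarrow> a = mat_I \<or> (e00 a \<le> e10 a \<and> e01 a \<le> e11 a)"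
  by (cases a) (simp add: ur_def idM_def matB_def prec_i_def Nstd_def mat_I_def)

lemma matmul_assoc: "matmul (matmul a b) c = matmul a (matmul b c)"
  by (cases a; cases b; cases c) (simp add: matmul_def algebra_simps)

lemma matmul_I [simp]: "matmul mat_I a = a" "matmul a mat_I = a"
  by (cases a; simp add: matmul_def mat_I_def)+

lemma unimodular_int:
  "unimodular a \<longleftrightarrow> int (e00 a) * int (e11 a) = int (e01 a) * int (e10 a) + 1"
  unfolding unimodular_def by (metis of_nat_1 of_nat_add of_nat_mult of_nat_eq_iff)

lemma unimodular_matmul: "unimodular a \<Longrightarrow> unimodular b \<Longrightarrow> unimodular (matmul a b)"
proof (cases a; cases b)
  fix a0 a1 a2 a3 b0 b1 b2 b3
  assume "unimodular a" "unimodular b" and ab: "a = M2 a0 a1 a2 a3" "b = M2 b0 b1 b2 b3"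
  then have "int a0 * int a3 - int a1 * int a2 = 1" "int b0 * int b3 - int b1 * int b2 = 1"
    by (simp_all add: unimodular_int)
  moreover have "(int a0 * int b0 + int a1 * int b2) * (int a2 * int b1 + int a3 * int b3)
      - (int a0 * int b1 + int a1 * int b3) * (int a2 * int b0 + int a3 * int b2)
    = (int a0 * int a3 - int a1 * int a2) * (int b0 * int b3 - int b1 * int b2)"
    by (simp add: algebra_simps)
  ultimately show ?thesis
    by (simp add: ab unimodular_int matmul_def algebra_simps)
qed

lemma unimodular_I: "unimodular mat_I" by (simp add: unimodular_def mat_I_def)
lemma unimodular_A: "unimodular mat_A" by (simp add: unimodular_def mat_A_def)
lemma unimodular_B: "unimodular mat_B" by (simp add: unimodular_def mat_B_def)

lemma unimodular_diag_pos:
  assumes "unimodular a" shows "e00 a \<ge> 1" "e11 a \<ge> 1"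
  using assms by (auto simp: unimodular_def Suc_le_eq intro: gr0I)

text \<open>The step of the Euclidean descent that writes every matrix of \<open>SL\<^sub>2(\<nat>)\<close> as a word in
  \<open>A\<close> and \<open>B\<close>.\<close>

lemma unimodular_rows_comparable:
  fixes x0 x1 x2 x3 :: nat
  assumes d: "x0 * x3 = x1 * x2 + 1" and ni: "M2 x0 x1 x2 x3 \<noteq> mat_I"
  shows "(x2 \<le> x0 \<and> x3 \<le> x1) \<or> (x0 \<le> x2 \<and> x1 \<le> x3)"
proof (rule ccontr)
  assume "\<not> ?thesis"
  then consider "x0 < x2" "x3 < x1" | "x2 < x0" "x1 < x3"
    by fastforce
  then show False
  proof cases
    case 1
    then have "x0 * x3 \<le> x2 * x1" by (intro mult_mono) auto
    then show False using d by (simp add: mult.commute)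
  next
    case 2
    then have "(x2 + 1) * (x1 + 1) \<le> x0 * x3" by (intro mult_mono) auto
    then have "x1 = 0" "x2 = 0" using d by (simp_all add: algebra_simps)
    then have "x0 = 1" "x3 = 1" using d by simp_all
    then show False using ni \<open>x1 = 0\<close> \<open>x2 = 0\<close> by (simp add: mat_I_def)
  qed
qed

fun word_mat :: "bool list \<Rightarrow> nat m2" where
  "word_mat [] = mat_I"
| "word_mat (True # w) = matmul mat_B (word_mat w)"
| "word_mat (False # w) = matmul mat_A (word_mat w)"

lemma word_mat_append: "word_mat (u @ v) = matmul (word_mat u) (word_mat v)"
proof (induction u)
  case (Cons x u) then show ?case by (cases x) (simp_all add: matmul_assoc)
qed simp

lemma unimodular_word_mat: "unimodular (word_mat w)"
proof (induction w)
  case (Cons x w) then show ?case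
    by (cases x) (simp_all add: unimodular_matmul unimodular_A unimodular_B)
qed (simp add: unimodular_I)

lemma word_mat_surj: "unimodular X \<Longrightarrow> \<exists>w. word_mat w = X"
proof (induction "e00 X + e01 X + e10 X + e11 X" arbitrary: X rule: less_induct)
  case less
  obtain x0 x1 x2 x3 where X: "X = M2 x0 x1 x2 x3" by (cases X)
  have d: "x0 * x3 = x1 * x2 + 1" using less.prems X by (simp add: unimodular_def)
  have x0: "x0 \<ge> 1" and x3: "x3 \<ge> 1" using unimodular_diag_pos[OF less.prems] X by auto
  show ?case
  proof (cases "X = mat_I")
    case True then show ?thesis by (intro exI[of _ "[]"]) simp
  next
    case False
    with unimodular_rows_comparable[OF d] X
    consider "x2 \<le> x0" "x3 \<le> x1" | "x0 \<le> x2" "x1 \<le> x3" by auto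
    then show ?thesis
    proof cases
      case 1
      define Y where "Y = M2 (x0 - x2) (x1 - x3) x2 x3"
      have "X = matmul mat_A Y" using 1 by (simp add: X Y_def matmul_def mat_A_def)
      moreover have "x2 * x3 \<le> x1 * x2" using 1 by simp
      then have "unimodular Y"
        using d by (simp add: Y_def unimodular_def diff_mult_distrib algebra_simps Suc_diff_le)
      moreover have "e00 Y + e01 Y + e10 Y + e11 Y < e00 X + e01 X + e10 X + e11 X"
        using 1 x3 by (simp add: X Y_def)
      ultimately obtain w where "word_mat (False # w) = X" using less.hyps by fastforce
      then show ?thesis by blast
    next
      case 2
      define Y where "Y = M2 x0 x1 (x2 - x0) (x3 - x1)"
      have "X = matmul mat_B Y" using 2 by (simp add: X Y_def matmul_def mat_B_def)
      moreover have "x0 * x1 \<le> x1 * x2" using 2 by simp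
      then have "unimodular Y"
        using d by (simp add: Y_def unimodular_def diff_mult_distrib2 algebra_simps Suc_diff_le)
      moreover have "e00 Y + e01 Y + e10 Y + e11 Y < e00 X + e01 X + e10 X + e11 X"
        using 2 x0 by (simp add: X Y_def)
      ultimately obtain w where "word_mat (True # w) = X" using less.hyps by fastforce
      then show ?thesis by blast
    qed
  qed
qed

lemma matmul_A_B_distinct:
  "unimodular y \<Longrightarrow> unimodular z \<Longrightarrow> matmul mat_B y \<noteq> matmul mat_A z"
  "matmul mat_A y \<noteq> mat_I" "matmul mat_B y \<noteq> mat_I"
  by (cases y; cases z; auto simp: matmul_def mat_A_def mat_B_def mat_I_def unimodular_def)+

lemma matmul_A_B_cancel [simp]:
  "matmul mat_A y = matmul mat_A z \<longleftrightarrow> y = z" "matmul mat_B y = matmul mat_B z \<longleftrightarrow> y = z"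
  by (cases y; cases z; auto simp: matmul_def mat_A_def mat_B_def)+

lemma word_mat_inj: "word_mat u = word_mat v \<Longrightarrow> u = v"
proof (induction u arbitrary: v)
  case Nil then show ?case
    by (cases v rule: word_mat.cases) (auto simp: matmul_A_B_distinct(2,3)[symmetric])
next
  case (Cons x u) then show ?case
    by (cases v rule: word_mat.cases; cases x)
      (auto simp: matmul_A_B_distinct unimodular_word_mat matmul_A_B_distinct(1)[symmetric])
qed

lemma ur_word_mat: "ur Nstd (word_mat w) \<longleftrightarrow> w = [] \<or> hd w"
proof (cases w rule: word_mat.cases)
  case (3 v)
  have "\<not> (e00 (word_mat v) + e10 (word_mat v) \<le> e10 (word_mat v) \<and>
           e01 (word_mat v) + e11 (word_mat v) \<le> e11 (word_mat v))"
    using unimodular_diag_pos[OF unimodular_word_mat[of v]] by simp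
  then show ?thesis
    using 3 matmul_A_B_distinct(2) by (simp add: ur_Nstd matmul_def mat_A_def)
qed (auto simp: ur_Nstd matmul_def mat_B_def)

lemma le_of_int_diff: "int y - int x = int z \<Longrightarrow> x \<le> y"
  by simp

lemma prec_e_matmul: assumes "unimodular a" shows "prec_e Nstd a (matmul g a)"
proof (cases a; cases g)
  fix a0 a1 a2 a3 g0 g1 g2 g3 assume ag: "a = M2 a0 a1 a2 a3" "g = M2 g0 g1 g2 g3"
  let ?d = "int a0 * int a3 - int a1 * int a2"
  have "?d = 1" using assms ag by (simp add: unimodular_int)
  moreover have
    "int ((g0 * a0 + g1 * a2) * a3) - int ((g0 * a1 + g1 * a3) * a2) = int g0 * ?d"
    "int ((g0 * a1 + g1 * a3) * a0) - int ((g0 * a0 + g1 * a2) * a1) = int g1 * ?d"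
    "int ((g2 * a0 + g3 * a2) * a3) - int ((g2 * a1 + g3 * a3) * a2) = int g2 * ?d"
    "int ((g2 * a1 + g3 * a3) * a0) - int ((g2 * a0 + g3 * a2) * a1) = int g3 * ?d"
    by (simp_all add: algebra_simps)
  ultimately show ?thesis
    by (simp only: prec_e_Nstd ag matmul_def m2.sel mult_1_right) (blast intro: le_of_int_diff)
qed

lemma prec_i_matmul: assumes "unimodular a" shows "prec_i Nstd a (matmul a g)"
proof (cases a; cases g)
  fix a0 a1 a2 a3 g0 g1 g2 g3 assume ag: "a = M2 a0 a1 a2 a3" "g = M2 g0 g1 g2 g3"
  let ?d = "int a0 * int a3 - int a1 * int a2"
  have "?d = 1" using assms ag by (simp add: unimodular_int)
  moreover have
    "int (a3 * (a0 * g0 + a1 * g2)) - int (a1 * (a2 * g0 + a3 * g2)) = int g0 * ?d"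
    "int (a3 * (a0 * g1 + a1 * g3)) - int (a1 * (a2 * g1 + a3 * g3)) = int g1 * ?d"
    "int (a0 * (a2 * g0 + a3 * g2)) - int (a2 * (a0 * g0 + a1 * g2)) = int g2 * ?d"
    "int (a0 * (a2 * g1 + a3 * g3)) - int (a2 * (a0 * g1 + a1 * g3)) = int g3 * ?d"
    by (simp_all add: algebra_simps)
  ultimately show ?thesis
    by (simp only: prec_i_Nstd ag matmul_def m2.sel mult_1_right) (blast intro: le_of_int_diff)
qed

text \<open>Conversely, \<open>a \<preceq>\<^sub>e x\<close> in \<open>\<nat>\<close> means that \<open>x a\<^sup>-\<^sup>1\<close>, whose entries are the
  differences compared in \<open>prec_e\<close>, is a matrix over \<open>\<nat>\<close>.\<close>

lemma prec_e_Nstd_factor: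
  assumes a: "unimodular a" and x: "unimodular x" and p: "prec_e Nstd a x"
  shows "\<exists>g. unimodular g \<and> matmul g a = x"
proof (cases a; cases x)
  fix a0 a1 a2 a3 x0 x1 x2 x3 assume ax: "a = M2 a0 a1 a2 a3" "x = M2 x0 x1 x2 x3"
  let ?da = "int a0 * int a3 - int a1 * int a2" and ?dx = "int x0 * int x3 - int x1 * int x2"
  have d: "?da = 1" "?dx = 1" using a x ax by (simp_all add: unimodular_int)
  have "x1 * a2 \<le> x0 * a3" "x0 * a1 \<le> x1 * a0" "x3 * a2 \<le> x2 * a3" "x2 * a1 \<le> x3 * a0"
    using p ax by (simp_all add: prec_e_Nstd)
  moreover define g0 g1 g2 g3
    where "g0 = x0 * a3 - x1 * a2" and "g1 = x1 * a0 - x0 * a1"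
      and "g2 = x2 * a3 - x3 * a2" and "g3 = x3 * a0 - x2 * a1"
  ultimately have
    g: "int g0 = int x0 * int a3 - int x1 * int a2" "int g1 = int x1 * int a0 - int x0 * int a1"
       "int g2 = int x2 * int a3 - int x3 * int a2" "int g3 = int x3 * int a0 - int x2 * int a1"
    by (simp_all add: of_nat_diff)
  have "int g0 * int a0 + int g1 * int a2 = int x0 * ?da"
       "int g0 * int a1 + int g1 * int a3 = int x1 * ?da"
       "int g2 * int a0 + int g3 * int a2 = int x2 * ?da"
       "int g2 * int a1 + int g3 * int a3 = int x3 * ?da"
       "int g0 * int g3 - int g1 * int g2 = ?dx * ?da"
    unfolding g by (simp_all add: algebra_simps)
  then have "int (g0 * a0 + g1 * a2) = int x0" "int (g0 * a1 + g1 * a3) = int x1"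
       "int (g2 * a0 + g3 * a2) = int x2" "int (g2 * a1 + g3 * a3) = int x3"
       "int (g0 * g3) = int (g1 * g2 + 1)"
    using d by simp_all
  then have "matmul (M2 g0 g1 g2 g3) a = x" "unimodular (M2 g0 g1 g2 g3)"
    unfolding of_nat_eq_iff by (simp_all add: ax matmul_def unimodular_def)
  then show ?thesis by blast
qed

lemma mle_matmul_right: "unimodular y \<Longrightarrow> mle Nstd x (matmul x y)"
  using unimodular_diag_pos[of y] mult_le_mono2[of 1 "e00 y"] mult_le_mono2[of 1 "e11 y"]
  by (simp add: mle_def Nstd_def matmul_def trans_le_add1 trans_le_add2)

definition block :: "nat \<Rightarrow> bool list" where
  "block k = True # replicate k False"

definition markov_code :: "nat list \<Rightarrow> nat m2" where
  "markov_code ws = word_mat (concat (map block ws))"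

lemma markov_code_Nil [simp]: "markov_code [] = mat_I"
  by (simp add: markov_code_def)

lemma markov_code_append: "markov_code (xs @ ys) = matmul (markov_code xs) (markov_code ys)"
  by (simp add: markov_code_def word_mat_append)

lemma markov_code_single: "markov_code [k] = M2 1 k 1 (k + 1)"
proof -
  have "word_mat (replicate k False) = M2 1 k 0 1"
    by (induction k) (simp_all add: mat_I_def matmul_def mat_A_def)
  then show ?thesis by (simp add: markov_code_def block_def matmul_def mat_B_def)
qed

lemma unimodular_markov_code: "unimodular (markov_code ws)"
  by (simp add: markov_code_def unimodular_word_mat)

lemma ur_markov_code: "ur Nstd (markov_code ws)"
  unfolding markov_code_def ur_word_mat by (cases ws) (simp_all add: block_def)

lemma takeWhile_Not_blocks: "takeWhile Not (concat (map block ws)) = []"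
  by (cases ws) (simp_all add: block_def)

lemma takeWhile_Not_replicate:
  "takeWhile Not (replicate k False @ zs) = replicate k False @ takeWhile Not zs"
  by (induction k) auto

lemma markov_code_inj: "markov_code xs = markov_code ys \<Longrightarrow> xs = ys"
  unfolding markov_code_def
proof (drule word_mat_inj, induction xs arbitrary: ys)
  case Nil then show ?case by (cases ys) (simp_all add: block_def)
next
  case (Cons x xs)
  then obtain y ys' where ys: "ys = y # ys'" by (cases ys) (simp_all add: block_def)
  with Cons.prems have "block x @ concat (map block xs) = block y @ concat (map block ys')"
    by simp
  then have eq: "replicate x False @ concat (map block xs) = replicate y False @ concat (map block ys')"
    unfolding block_def[of x] block_def[of y] by simp
  then have "takeWhile Not (replicate x False @ concat (map block xs))
      = takeWhile Not (replicate y False @ concat (map block ys'))" by simp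
  then have "x = y" by (simp add: takeWhile_Not_replicate takeWhile_Not_blocks)
  with eq ys Cons.IH show ?case by simp
qed

lemma markov_code_eq_I_iff: "markov_code ws = mat_I \<longleftrightarrow> ws = []"
  using markov_code_inj[of ws "[]"] by auto

lemma blocks_prefix:
  assumes "u @ v = concat (map block ws)" "v = [] \<or> hd v"
  shows "\<exists>i \<le> length ws. u = concat (map block (take i ws))"
  using assms
proof (induction ws arbitrary: u)
  case (Cons k ws)
  show ?case
  proof (cases "u = []")
    case False
    from Cons.prems(1) obtain us where
      "u = block k @ us \<and> us @ v = concat (map block ws) \<or> u @ us = block k \<and> v = us @ concat (map block ws)"
      by (auto simp: append_eq_append_conv2)
    then show ?thesis
    proof (elim disjE conjE)
      assume "u = block k @ us" "us @ v = concat (map block ws)"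
      with Cons.IH Cons.prems(2) show ?thesis
        by (metis Suc_le_mono concat.simps(2) length_Cons list.map(2) take_Suc_Cons)
    next
      assume u: "u @ us = block k" and v: "v = us @ concat (map block ws)"
      have "us = []"
      proof (rule ccontr)
        assume "us \<noteq> []"
        obtain u' where "u' @ us = replicate k False"
          using u False by (cases u) (auto simp: block_def)
        moreover have "hd us \<in> set (u' @ us)" using \<open>us \<noteq> []\<close> by simp
        ultimately have "\<not> hd us" by (metis in_set_replicate)
        with v Cons.prems(2) \<open>us \<noteq> []\<close> show False by simp
      qed
      with u show ?thesis by (intro exI[of _ 1]) simp
    qed
  qed (auto intro: exI[of _ 0])
qed simp

lemma block_suffix_eq: "xs @ block k = ys @ block l \<Longrightarrow> k = l"
proof -
  assume "xs @ block k = ys @ block l"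
  then have "takeWhile Not (rev (xs @ block k)) = takeWhile Not (rev (ys @ block l))" by simp
  then show "k = l" by (simp add: block_def takeWhile_Not_replicate)
qed

text \<open>Since \<open>g\<close> is either the identity or its word starts with \<open>B\<close>, the factorisation \<open>a g\<close>
  cuts the word of the code at a block boundary.\<close>

lemma occurrence_Nstd:
  assumes g: "unimodular g" "ur Nstd g" "matmul a g = markov_code ws"
    and h: "unimodular h" "matmul h (markov_code [l]) = a"
  shows "\<exists>i < length ws. l = ws ! i \<and> a = markov_code (take (Suc i) ws)"
proof -
  obtain wg wh where wg: "word_mat wg = g" and wh: "word_mat wh = h"
    using word_mat_surj g(1) h(1) by metis
  have "word_mat ((wh @ block l) @ wg) = word_mat (concat (map block ws))"
    using g(3) h(2) wg wh by (simp add: word_mat_append markov_code_def flip: matmul_assoc)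
  then have "(wh @ block l) @ wg = concat (map block ws)" by (rule word_mat_inj)
  moreover have "wg = [] \<or> hd wg" using g(2) wg ur_word_mat by blast
  ultimately obtain i where i: "i \<le> length ws" "wh @ block l = concat (map block (take i ws))"
    using blocks_prefix by blast
  then obtain i' where i': "i = Suc i'" by (cases i) (auto simp: block_def)
  with i have "wh @ block l = concat (map block (take i' ws)) @ block (ws ! i')"
    by (simp add: take_Suc_conv_app_nth)
  then have "l = ws ! i'" by (rule block_suffix_eq)
  moreover have "a = markov_code (take i ws)"
    using h(2) wh arg_cong[OF i(2), of word_mat] by (simp add: markov_code_def word_mat_append)
  ultimately show ?thesis using i i' by (intro exI[of _ i']) auto
qed

lemma prec_e_last_block:
  assumes "prec_e Nstd (markov_code [b]) (markov_code (ws @ [c]))" shows "b = c"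
proof -
  obtain g where "unimodular g" "matmul g (markov_code [b]) = markov_code (ws @ [c])"
    using prec_e_Nstd_factor[OF unimodular_markov_code unimodular_markov_code assms] by blast
  moreover obtain wg where "word_mat wg = g" using word_mat_surj calculation(1) by blast
  ultimately have "word_mat (wg @ block b) = word_mat (concat (map block ws) @ block c)"
    by (simp add: markov_code_def word_mat_append)
  then show ?thesis by (metis word_mat_inj block_suffix_eq)
qed

text \<open>Right and left division by \<open>[k]\<close>, written without inverses so that they make sense
  in any model of \<open>PA\<^sup>-\<close> with truncated subtraction.\<close>

definition div_block_right :: "nat \<Rightarrow> nat m2 \<Rightarrow> nat m2" where
  "div_block_right k x = M2 (e00 x * (k + 1) - e01 x) (e01 x - k * e00 x)
                            (e10 x * (k + 1) - e11 x) (e11 x - k * e10 x)"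

definition div_block_left :: "nat \<Rightarrow> nat m2 \<Rightarrow> nat m2" where
  "div_block_left k x = M2 ((k + 1) * e00 x - k * e10 x) ((k + 1) * e01 x - k * e11 x)
                           (e10 x - e00 x) (e11 x - e01 x)"

lemma div_block_right_matmul: "div_block_right k (matmul d (markov_code [k])) = d"
  by (cases d) (simp add: div_block_right_def matmul_def markov_code_single algebra_simps)

lemma div_block_left_matmul: "div_block_left k (matmul (markov_code [k]) d) = d"
  by (cases d) (simp add: div_block_left_def matmul_def markov_code_single algebra_simps)

definition runs_code :: "nat \<Rightarrow> nat \<Rightarrow> nat \<Rightarrow> nat \<Rightarrow> nat m2" where
  "runs_code c p b q = markov_code (replicate p c @ replicate q b)"

lemma runs_code_Suc_right: "runs_code c p b (Suc q) = matmul (runs_code c p b q) (markov_code [b])"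
  by (simp add: runs_code_def replicate_append_same flip: markov_code_append replicate_Suc)

lemma runs_code_Suc_left: "runs_code c (Suc p) b q = matmul (markov_code [c]) (runs_code c p b q)"
  by (simp add: runs_code_def flip: markov_code_append)

lemma unimodular_runs_code: "unimodular (runs_code c p b q)"
  by (simp add: runs_code_def unimodular_markov_code)

lemma runs_code_inj: "runs_code c p b q = runs_code c p b q' \<Longrightarrow> q = q'"
  unfolding runs_code_def by (drule markov_code_inj) (metis append_eq_append_conv length_replicate)

lemma runs_code_ne_I: "p \<ge> 1 \<or> q \<ge> 1 \<Longrightarrow> runs_code c p b q \<noteq> mat_I"
  by (auto simp: runs_code_def markov_code_eq_I_iff)

lemma block_ne_runs_code: "p \<ge> 1 \<Longrightarrow> q \<ge> 1 \<Longrightarrow> markov_code [c] \<noteq> runs_code c p b q"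
  unfolding runs_code_def by (auto dest!: markov_code_inj arg_cong[of _ _ length])

lemma not_prec_e_runs_code_0:
  assumes "b \<noteq> c" "p \<ge> 1" shows "\<not> prec_e Nstd (markov_code [b]) (runs_code c p b 0)"
proof
  assume "prec_e Nstd (markov_code [b]) (runs_code c p b 0)"
  moreover have "replicate p c = replicate (p - 1) c @ [c]"
    using assms(2) by (metis Suc_diff_le diff_Suc_1 replicate_Suc replicate_append_same)
  ultimately show False using assms(1) prec_e_last_block by (simp add: runs_code_def)
qed

lemma runs_code_pred:
  "j \<ge> 1 \<Longrightarrow> matmul (runs_code c p b (j - 1)) (markov_code [b]) = runs_code c p b j"
  using runs_code_Suc_right[of c p b "j - 1"] by simp

lemma runs_code_pred_left:
  "p \<ge> 1 \<Longrightarrow> matmul (markov_code [c]) (runs_code c (p - 1) b q) = runs_code c p b q"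
  using runs_code_Suc_left[of c "p - 1" b q] by simp

lemma runs_code_div_block_left:
  "p \<ge> 1 \<Longrightarrow> div_block_left c (runs_code c p b q) = runs_code c (p - 1) b q"
  using div_block_left_matmul runs_code_pred_left[of p c b q] by metis

lemma runs_code_div_block_right:
  "j \<ge> 1 \<Longrightarrow> div_block_right b (runs_code c p b j) = runs_code c p b (j - 1)"
  using div_block_right_matmul runs_code_Suc_right[of c p b "j - 1"] by simp

lemma runs_code_prefix_less:
  "j \<ge> 1 \<Longrightarrow> mle Nstd (runs_code c p b (j - 1)) (runs_code c p b j)
     \<and> runs_code c p b (j - 1) \<noteq> runs_code c p b j"
  using runs_code_pred[of j c p b] runs_code_inj[of c p b "j - 1" j]
    mle_matmul_right[OF unimodular_markov_code, of "runs_code c p b (j - 1)" "[b]"]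
  by auto

lemma block_less_runs_code:
  "p \<ge> 1 \<Longrightarrow> q \<ge> 1 \<Longrightarrow> mle Nstd (markov_code [c]) (runs_code c p b q)
     \<and> markov_code [c] \<noteq> runs_code c p b q"
  using runs_code_pred_left[of p c b q] block_ne_runs_code[of p q c b]
    mle_matmul_right[OF unimodular_runs_code, of "markov_code [c]" c "p - 1" b q]
  by simp

lemma occurrence_runs_code:
  assumes "b \<noteq> c" "unimodular g" "ur Nstd g" "matmul a g = runs_code c p b q"
    "unimodular h" "matmul h (markov_code [l]) = a"
  shows "(l = c \<or> l = b) \<and> (l = b \<longrightarrow> (\<exists>j. 1 \<le> j \<and> j \<le> q \<and> a = runs_code c p b j))"
proof -
  from occurrence_Nstd[OF assms(2,3) assms(4)[unfolded runs_code_def] assms(5,6)]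
  obtain i where i: "i < p + q" "l = (replicate p c @ replicate q b) ! i"
    and a: "a = markov_code (take (Suc i) (replicate p c @ replicate q b))" by auto
  show ?thesis
  proof (cases "i < p")
    case True then show ?thesis using i assms(1) by (simp add: nth_append)
  next
    case False
    then have "take (Suc i) (replicate p c @ replicate q b) = replicate p c @ replicate (Suc i - p) b"
      using i(1) by (simp add: take_append Suc_diff_le)
    with False i a show ?thesis
      by (auto simp: nth_append runs_code_def intro!: exI[of _ "Suc i - p"])
  qed
qed


section \<open>Exponential polynomials\<close>

definition exp_poly :: "real set \<Rightarrow> (nat \<Rightarrow> real) set" where
  "exp_poly G = {f. \<exists>F a. finite F \<and> F \<subseteq> G \<and> (\<forall>n. f n = (\<Sum>r\<in>F. a r * r ^ n))}"

lemma exp_sum_limit: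
  fixes a :: "real \<Rightarrow> real"
  assumes F: "finite F" "F \<subseteq> {0<..}" and r0: "r0 \<in> F" and mx: "\<forall>r\<in>F. a r \<noteq> 0 \<longrightarrow> r \<le> r0"
  shows "(\<lambda>n. (\<Sum>r\<in>F. a r * r ^ n) / r0 ^ n) \<longlonglongrightarrow> a r0"
proof -
  have pos: "r0 > 0" using F r0 by auto
  have "(\<lambda>n. a r * (r / r0) ^ n) \<longlonglongrightarrow> (if r = r0 then a r0 else 0)" if r: "r \<in> F" for r
  proof (cases "r = r0 \<or> a r = 0")
    case False
    with mx r F(2) have "norm (r / r0) < 1" by force
    then have "(\<lambda>n. a r * (r / r0) ^ n) \<longlonglongrightarrow> a r * 0"
      by (intro tendsto_mult tendsto_const LIMSEQ_power_zero)
    then show ?thesis using False by simp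
  qed (use pos in auto)
  then have "(\<lambda>n. \<Sum>r\<in>F. a r * (r / r0) ^ n) \<longlonglongrightarrow> (\<Sum>r\<in>F. if r = r0 then a r0 else 0)"
    by (rule tendsto_sum)
  moreover have "(\<Sum>r\<in>F. a r * r ^ n) / r0 ^ n = (\<Sum>r\<in>F. a r * (r / r0) ^ n)" for n
    unfolding sum_divide_distrib by (simp add: power_divide)
  ultimately show ?thesis using F r0 by simp
qed

lemma exp_sum_eventually_sign:
  fixes a :: "real \<Rightarrow> real"
  assumes F: "finite F" "F \<subseteq> {0<..}" and nz: "\<exists>r\<in>F. a r \<noteq> 0"
  shows "eventually (\<lambda>n. (\<Sum>r\<in>F. a r * r ^ n) > 0) sequentially \<or>
         eventually (\<lambda>n. (\<Sum>r\<in>F. a r * r ^ n) < 0) sequentially"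
proof -
  define r0 where "r0 = Max {r\<in>F. a r \<noteq> 0}"
  have r0: "r0 \<in> F" "a r0 \<noteq> 0" and mx: "\<forall>r\<in>F. a r \<noteq> 0 \<longrightarrow> r \<le> r0"
    using Max_in[of "{r\<in>F. a r \<noteq> 0}"] F nz by (auto simp: r0_def)
  have pos: "r0 > 0" using F r0 by auto
  note lim = exp_sum_limit[OF F r0(1) mx]
  show ?thesis
  proof (cases "a r0 > 0")
    case True
    from order_tendstoD(1)[OF lim True] have ?thesis
      by (rule disjI1[OF eventually_mono]) (use pos in \<open>simp add: zero_less_divide_iff\<close>)
    then show ?thesis .
  next
    case False
    with r0 have "a r0 < 0" by simp
    from order_tendstoD(2)[OF lim this] show ?thesis
      by (rule disjI2[OF eventually_mono]) (use pos in \<open>simp add: divide_less_0_iff\<close>)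
  qed
qed

lemma exp_sum_eventually_zero:
  fixes a :: "real \<Rightarrow> real"
  assumes F: "finite F" "F \<subseteq> {0<..}"
    and z: "eventually (\<lambda>n. (\<Sum>r\<in>F. a r * r ^ n) = 0) sequentially"
  shows "\<forall>r\<in>F. a r = 0"
proof (rule ccontr)
  assume "\<not> ?thesis"
  then have "\<exists>r\<in>F. a r \<noteq> 0" by blast
  from exp_sum_eventually_sign[OF F this]
  have "eventually (\<lambda>n. (\<Sum>r\<in>F. a r * r ^ n) \<noteq> 0) sequentially"
    by (auto elim: eventually_mono)
  with z have "eventually (\<lambda>n. False) sequentially" by eventually_elim simp
  then show False by simp
qed

lemma exp_poly_sign:
  assumes "G \<subseteq> {0<..}" and "f \<in> exp_poly G"
  shows "(\<forall>n. f n = 0) \<or> eventually (\<lambda>n. f n > 0) sequentially \<or> eventually (\<lambda>n. f n < 0) sequentially"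
proof -
  obtain F a where "finite F" "F \<subseteq> G" and f: "\<forall>n. f n = (\<Sum>r\<in>F. a r * r ^ n)"
    using assms(2) by (auto simp: exp_poly_def)
  with assms(1) exp_sum_eventually_sign[of F a] show ?thesis by (cases "\<exists>r\<in>F. a r \<noteq> 0") auto
qed

lemma exp_poly_mono: "G \<subseteq> H \<Longrightarrow> f \<in> exp_poly G \<Longrightarrow> f \<in> exp_poly H"
  unfolding exp_poly_def by (auto intro: order_trans)

lemma exp_poly_geometric: "(\<lambda>n. c * r ^ n) \<in> exp_poly {r}"
  unfolding exp_poly_def by (intro CollectI exI[of _ "{r}"] exI[of _ "\<lambda>_. c"]) simp

lemma exp_poly_const: "(\<lambda>n. c) \<in> exp_poly {1}"
  using exp_poly_geometric[of c 1] by simp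

lemma exp_poly_zero: "(\<lambda>n. 0) \<in> exp_poly G"
  unfolding exp_poly_def by (intro CollectI exI[of _ "{}"]) simp

lemma exp_poly_add:
  assumes "f \<in> exp_poly G" and "g \<in> exp_poly H"
  shows "(\<lambda>n. f n + g n) \<in> exp_poly (G \<union> H)"
proof -
  obtain F1 a1 where 1: "finite F1" "F1 \<subseteq> G" "\<forall>n. f n = (\<Sum>r\<in>F1. a1 r * r ^ n)"
    using assms(1) by (auto simp: exp_poly_def)
  obtain F2 a2 where 2: "finite F2" "F2 \<subseteq> H" "\<forall>n. g n = (\<Sum>r\<in>F2. a2 r * r ^ n)"
    using assms(2) by (auto simp: exp_poly_def)
  define a where "a r = (if r \<in> F1 then a1 r else 0) + (if r \<in> F2 then a2 r else 0)" for r
  have "f n + g n = (\<Sum>r\<in>F1 \<union> F2. a r * r ^ n)" for n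
  proof -
    have "(\<Sum>r\<in>F1 \<union> F2. a r * r ^ n) = (\<Sum>r\<in>F1 \<union> F2.
        (if r \<in> F1 then a1 r * r ^ n else 0) + (if r \<in> F2 then a2 r * r ^ n else 0))"
      by (rule sum.cong) (auto simp: a_def algebra_simps)
    also have "\<dots> = f n + g n"
      using 1 2 by (simp add: sum.distrib sum.If_cases Int_absorb1)
    finally show ?thesis by simp
  qed
  with 1 2 show ?thesis unfolding exp_poly_def by blast
qed

lemma exp_poly_mult:
  assumes "f \<in> exp_poly G" and "g \<in> exp_poly H"
  shows "(\<lambda>n. f n * g n) \<in> exp_poly {x * y |x y. x \<in> G \<and> y \<in> H}"
proof -
  obtain F1 a1 where 1: "finite F1" "F1 \<subseteq> G" "\<forall>n. f n = (\<Sum>r\<in>F1. a1 r * r ^ n)"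
    using assms(1) by (auto simp: exp_poly_def)
  obtain F2 a2 where 2: "finite F2" "F2 \<subseteq> H" "\<forall>n. g n = (\<Sum>r\<in>F2. a2 r * r ^ n)"
    using assms(2) by (auto simp: exp_poly_def)
  define h where "h = (\<lambda>p::real \<times> real. fst p * snd p)"
  define a where "a t = (\<Sum>p\<in>{p \<in> F1 \<times> F2. h p = t}. a1 (fst p) * a2 (snd p))" for t
  have fin: "finite (F1 \<times> F2)" using 1 2 by simp
  have "f n * g n = (\<Sum>t\<in>h ` (F1 \<times> F2). a t * t ^ n)" for n
  proof -
    have "f n * g n = (\<Sum>p\<in>F1 \<times> F2. (a1 (fst p) * a2 (snd p)) * h p ^ n)"
      using 1 2 by (simp add: sum_product sum.cartesian_product h_def power_mult_distrib
          split_def algebra_simps)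
    also have "\<dots> = (\<Sum>t\<in>h ` (F1 \<times> F2). \<Sum>p\<in>{p \<in> F1 \<times> F2. h p = t}. (a1 (fst p) * a2 (snd p)) * h p ^ n)"
      using fin by (rule sum.image_gen)
    also have "\<dots> = (\<Sum>t\<in>h ` (F1 \<times> F2). a t * t ^ n)"
      unfolding a_def sum_distrib_right by (intro sum.cong) auto
    finally show ?thesis .
  qed
  moreover have "h ` (F1 \<times> F2) \<subseteq> {x * y |x y. x \<in> G \<and> y \<in> H}"
    using 1(2) 2(2) by (auto simp: h_def) blast
  ultimately show ?thesis using fin unfolding exp_poly_def by blast
qed

lemma exp_poly_scale: "f \<in> exp_poly G \<Longrightarrow> (\<lambda>n. c * f n) \<in> exp_poly G"
  using exp_poly_mult[OF exp_poly_const] by (fastforce intro: exp_poly_mono)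

lemma exp_poly_diff:
  "f \<in> exp_poly G \<Longrightarrow> g \<in> exp_poly H \<Longrightarrow> (\<lambda>n. f n - g n) \<in> exp_poly (G \<union> H)"
  using exp_poly_add[OF _ exp_poly_scale[of g H "-1"]] by simp

lemma exp_poly_eventually_eq_geometric:
  assumes f: "f \<in> exp_poly G" and G: "G \<subseteq> {0<..}" and m: "m > 0" "m \<notin> G" and w: "w > 0" "w \<noteq> m"
    and ev: "eventually (\<lambda>n. f n = c * m ^ n + d * w ^ n) sequentially"
  shows "c = 0"
proof -
  obtain F a where F: "finite F" "F \<subseteq> G" and fa: "\<forall>n. f n = (\<Sum>r\<in>F. a r * r ^ n)"
    using f by (auto simp: exp_poly_def)
  define a' where
    "a' r = (if r \<in> F then a r else 0) - (if r = m then c else 0) - (if r = w then d else 0)" for r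
  have "(\<Sum>r\<in>F \<union> {m, w}. a' r * r ^ n) = f n - c * m ^ n - d * w ^ n" for n
  proof -
    have "(\<Sum>r\<in>F \<union> {m, w}. a' r * r ^ n) = (\<Sum>r\<in>F \<union> {m, w}. (if r \<in> F then a r * r ^ n else 0)
        - (if r = m then c * r ^ n else 0) - (if r = w then d * r ^ n else 0))"
      by (rule sum.cong) (auto simp: a'_def algebra_simps)
    also have "\<dots> = f n - c * m ^ n - d * w ^ n"
      using F fa by (simp add: sum_subtractf sum.If_cases Int_absorb1 subset_insertI2)
    finally show ?thesis .
  qed
  with ev have "eventually (\<lambda>n. (\<Sum>r\<in>F \<union> {m, w}. a' r * r ^ n) = 0) sequentially"
    by (auto elim: eventually_mono)
  from exp_sum_eventually_zero[OF _ _ this] F G m w have "a' m = 0" by auto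
  with m w F(2) show "c = 0" by (auto simp: a'_def)
qed


section \<open>Closed form of the powers of a block matrix\<close>

text \<open>The eigenvalues of \<open>[l]\<close>, i.e.\ the roots of \<open>x\<^sup>2 - (l + 2) x + 1\<close>.\<close>

definition mu_root :: "nat \<Rightarrow> real" where
  "mu_root l = (real l + 2 + sqrt ((real l + 2)\<^sup>2 - 4)) / 2"

definition nu_root :: "nat \<Rightarrow> real" where
  "nu_root l = (real l + 2 - sqrt ((real l + 2)\<^sup>2 - 4)) / 2"

lemma roots_quadratic:
  "mu_root l ^ 2 = (real l + 2) * mu_root l - 1" "nu_root l ^ 2 = (real l + 2) * nu_root l - 1"
  "mu_root l * nu_root l = 1"
proof -
  have "(real l + 2)\<^sup>2 \<ge> 2\<^sup>2" by (rule power_mono) auto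
  then have "(sqrt ((real l + 2)\<^sup>2 - 4))\<^sup>2 = (real l + 2)\<^sup>2 - 4" by simp
  then show "mu_root l ^ 2 = (real l + 2) * mu_root l - 1" "nu_root l ^ 2 = (real l + 2) * nu_root l - 1"
    "mu_root l * nu_root l = 1"
    unfolding mu_root_def nu_root_def by (simp_all add: field_simps power2_eq_square)
qed

lemma nu_root_inverse: "nu_root l = inverse (mu_root l)"
  using inverse_unique[OF roots_quadratic(3)] by simp

lemma discriminant_pos: "l \<ge> 1 \<Longrightarrow> sqrt ((real l + 2)\<^sup>2 - 4) > 0"
proof -
  assume "l \<ge> 1"
  then have "(real l + 2)\<^sup>2 \<ge> 3\<^sup>2" by (intro power_mono) auto
  then show ?thesis by simp
qed

lemma mu_root_gt_1: "l \<ge> 1 \<Longrightarrow> mu_root l > 1"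
  using discriminant_pos[of l] unfolding mu_root_def by (simp del: real_sqrt_gt_0_iff)

lemma mu_root_ne_nu_root: "l \<ge> 1 \<Longrightarrow> mu_root l \<noteq> nu_root l"
  using discriminant_pos[of l] unfolding mu_root_def nu_root_def by simp

definition lucas_U :: "nat \<Rightarrow> nat \<Rightarrow> real" where
  "lucas_U l k = (mu_root l ^ k - nu_root l ^ k) / (mu_root l - nu_root l)"

lemma lucas_U_0: "lucas_U l 0 = 0"
  by (simp add: lucas_U_def)

lemma lucas_U_1: "l \<ge> 1 \<Longrightarrow> lucas_U l 1 = 1"
  using mu_root_ne_nu_root by (simp add: lucas_U_def)

lemma lucas_U_rec:
  assumes "l \<ge> 1" shows "lucas_U l (k + 2) = (real l + 2) * lucas_U l (k + 1) - lucas_U l k"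
proof -
  have "r ^ (k + 2) = (real l + 2) * r ^ (k + 1) - r ^ k" if "r ^ 2 = (real l + 2) * r - 1" for r :: real
  proof -
    have "r ^ (k + 2) = r ^ k * r ^ 2" by (simp only: power_add)
    also have "\<dots> = r ^ k * ((real l + 2) * r - 1)" using that by simp
    also have "\<dots> = (real l + 2) * r ^ (k + 1) - r ^ k" by (simp add: algebra_simps)
    finally show ?thesis .
  qed
  then have "mu_root l ^ (k + 2) = (real l + 2) * mu_root l ^ (k + 1) - mu_root l ^ k"
      "nu_root l ^ (k + 2) = (real l + 2) * nu_root l ^ (k + 1) - nu_root l ^ k"
    using roots_quadratic by blast+
  then show ?thesis
    unfolding lucas_U_def by (simp only:) (simp add: diff_divide_distrib right_diff_distrib)
qed

lemma markov_code_replicate_entries: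
  assumes "l \<ge> 1"
  shows "real (e10 (markov_code (replicate k l))) = lucas_U l k \<and>
         real (e01 (markov_code (replicate k l))) = real l * lucas_U l k \<and>
         real (e00 (markov_code (replicate k l))) = lucas_U l (k + 1) - (real l + 1) * lucas_U l k \<and>
         real (e11 (markov_code (replicate k l))) = lucas_U l (k + 1) - lucas_U l k"
proof (induction k)
  case 0 then show ?case using lucas_U_0 lucas_U_1[OF assms] by (simp add: mat_I_def)
next
  case (Suc k)
  obtain x0 x1 x2 x3 where X: "markov_code (replicate k l) = M2 x0 x1 x2 x3"
    by (cases "markov_code (replicate k l)")
  have "replicate (Suc k) l = replicate k l @ [l]" by (simp add: replicate_append_same)
  then have S: "markov_code (replicate (Suc k) l)
      = M2 (x0 + x1) (x0 * l + x1 * (l + 1)) (x2 + x3) (x2 * l + x3 * (l + 1))"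
    by (simp only: markov_code_append X) (simp add: matmul_def markov_code_single)
  have IH: "real x2 = lucas_U l k" "real x1 = real l * lucas_U l k"
    "real x0 = lucas_U l (Suc k) - (real l + 1) * lucas_U l k" "real x3 = lucas_U l (Suc k) - lucas_U l k"
    using Suc.IH X by auto
  have "lucas_U l (Suc k + 1) = (real l + 2) * lucas_U l (Suc k) - lucas_U l k"
    using lucas_U_rec[OF assms, of k] by simp
  then show ?case unfolding S m2.sel of_nat_add of_nat_mult IH by (simp add: algebra_simps)
qed

lemma exp_poly_lucas_U:
  assumes "l \<ge> 1" shows "(\<lambda>n. lucas_U l (a * n + j)) \<in> exp_poly {mu_root l ^ a, nu_root l ^ a}"
proof -
  define d where "d = mu_root l - nu_root l"
  have "(\<lambda>n. (mu_root l ^ j / d) * (mu_root l ^ a) ^ n - (nu_root l ^ j / d) * (nu_root l ^ a) ^ n)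
      \<in> exp_poly ({mu_root l ^ a} \<union> {nu_root l ^ a})"
    by (intro exp_poly_diff exp_poly_geometric)
  moreover have "(mu_root l ^ j / d) * (mu_root l ^ a) ^ n - (nu_root l ^ j / d) * (nu_root l ^ a) ^ n
      = lucas_U l (a * n + j)" for n
    by (simp add: lucas_U_def d_def power_add power_mult diff_divide_distrib algebra_simps)
  ultimately show ?thesis by (simp add: insert_commute)
qed

lemma exp_poly_power_entries:
  assumes "l \<ge> 1"
  shows "(\<lambda>n. real (e00 (markov_code (replicate (a * n) l)))) \<in> exp_poly {mu_root l ^ a, nu_root l ^ a}"
    "(\<lambda>n. real (e01 (markov_code (replicate (a * n) l)))) \<in> exp_poly {mu_root l ^ a, nu_root l ^ a}"
    "(\<lambda>n. real (e10 (markov_code (replicate (a * n) l)))) \<in> exp_poly {mu_root l ^ a, nu_root l ^ a}"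
    "(\<lambda>n. real (e11 (markov_code (replicate (a * n) l)))) \<in> exp_poly {mu_root l ^ a, nu_root l ^ a}"
proof -
  let ?B = "{mu_root l ^ a, nu_root l ^ a}"
  have U0: "(\<lambda>n. lucas_U l (a * n)) \<in> exp_poly ?B" and U1: "(\<lambda>n. lucas_U l (a * n + 1)) \<in> exp_poly ?B"
    using exp_poly_lucas_U[OF assms, of a 0] exp_poly_lucas_U[OF assms, of a 1] by simp_all
  note E = markov_code_replicate_entries[OF assms, of "a * n" for n]
  have "(\<lambda>n. lucas_U l (a * n + 1) - (real l + 1) * lucas_U l (a * n)) \<in> exp_poly (?B \<union> ?B)"
    by (intro exp_poly_diff exp_poly_scale U0 U1)
  then show "(\<lambda>n. real (e00 (markov_code (replicate (a * n) l)))) \<in> exp_poly ?B" using E by simp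
  show "(\<lambda>n. real (e01 (markov_code (replicate (a * n) l)))) \<in> exp_poly ?B"
    using E exp_poly_scale[OF U0] by simp
  show "(\<lambda>n. real (e10 (markov_code (replicate (a * n) l)))) \<in> exp_poly ?B" using E U0 by simp
  have "(\<lambda>n. lucas_U l (a * n + 1) - lucas_U l (a * n)) \<in> exp_poly (?B \<union> ?B)"
    by (intro exp_poly_diff U0 U1)
  then show "(\<lambda>n. real (e11 (markov_code (replicate (a * n) l)))) \<in> exp_poly ?B" using E by simp
qed


definition decided :: "(nat \<Rightarrow> bool) \<Rightarrow> bool" where
  "decided P \<longleftrightarrow> eventually P sequentially \<or> eventually (\<lambda>n. \<not> P n) sequentially"

lemma eventually_both_False:
  "eventually P sequentially \<Longrightarrow> eventually (\<lambda>n. \<not> P n) sequentially \<Longrightarrow> False"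
  by (drule (1) eventually_conj) simp

lemma decided_const:
  "eventually (\<lambda>n. P n \<longleftrightarrow> c) sequentially \<Longrightarrow> decided P \<and> (eventually P sequentially \<longleftrightarrow> c)"
  unfolding decided_def by (cases c) (auto elim: eventually_mono dest: eventually_both_False)

lemma decided_by_mono:
  assumes Q: "eventually Q sequentially" and PQ: "(\<forall>n. Q n \<longrightarrow> P n) \<or> (\<forall>n. Q n \<longrightarrow> \<not> P n)"
  shows "decided P"
  using PQ unfolding decided_def
proof
  assume "\<forall>n. Q n \<longrightarrow> P n"
  then show "eventually P sequentially \<or> eventually (\<lambda>n. \<not> P n) sequentially"
    by (intro disjI1 eventually_mono[OF Q]) blast
next
  assume "\<forall>n. Q n \<longrightarrow> \<not> P n"
  then show "eventually P sequentially \<or> eventually (\<lambda>n. \<not> P n) sequentially"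
    by (intro disjI2 eventually_mono[OF Q]) blast
qed

lemma decided_eventually_iff:
  assumes "decided P" shows "eventually (\<lambda>n. P n \<longleftrightarrow> eventually P sequentially) sequentially"
proof -
  from assms consider (T) "eventually P sequentially"
    | (F) "eventually (\<lambda>n. \<not> P n) sequentially" "\<not> eventually P sequentially"
    unfolding decided_def using eventually_both_False by blast
  then show ?thesis
  proof cases
    case T then show ?thesis by (rule eventually_mono) (simp add: T)
  next
    case F show ?thesis using F(1) by (rule eventually_mono) (simp add: F(2))
  qed
qed

lemma decided_cong:
  assumes "eventually (\<lambda>n. P n \<longleftrightarrow> Q n) sequentially" "decided P"
  shows "decided Q \<and> (eventually Q sequentially \<longleftrightarrow> eventually P sequentially)"
proof (rule decided_const)
  show "eventually (\<lambda>n. Q n \<longleftrightarrow> eventually P sequentially) sequentially"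
    using assms(1) decided_eventually_iff[OF assms(2)] by eventually_elim simp
qed

lemma decided_combine:
  assumes "decided P" "decided Q"
  shows "decided (\<lambda>n. f (P n) (Q n)) \<and>
    (eventually (\<lambda>n. f (P n) (Q n)) sequentially \<longleftrightarrow>
       f (eventually P sequentially) (eventually Q sequentially))"
proof (rule decided_const)
  show "eventually (\<lambda>n. f (P n) (Q n) \<longleftrightarrow>
      f (eventually P sequentially) (eventually Q sequentially)) sequentially"
    using decided_eventually_iff[OF assms(1)] decided_eventually_iff[OF assms(2)]
      by eventually_elim simp
qed


section \<open>The term model\<close>

datatype pterm = Entry nat | PZero | POne | PAdd pterm pterm | PMul pterm pterm | PMinus pterm pterm

instance pterm :: countable
  by countable_datatype

definition even_products :: "real \<Rightarrow> real \<Rightarrow> real set" where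
  "even_products x y = {power_int x s * power_int y t |s t. even (s + t)}"

text \<open>\<open>gb\<close> and \<open>gi\<close> are the Goedel numbers of \<open>\<bottom>\<close> and \<open>\<bottom>\<rightarrow>\<bottom>\<close>; \<open>pi_mat n\<close> codes
  \<open>(\<bottom>\<rightarrow>\<bottom>)\<^bsup>al n\<^esup> \<bottom>\<^bsup>be n\<^esup>\<close>.  The assumption \<open>mu_notin\<close> keeps the code of
  \<open>(\<bottom>\<rightarrow>\<bottom>)\<^bsup>al n\<^esup>\<close>, the place of the first \<open>\<bottom>\<close>, out of the model.\<close>

locale besh_model =
  fixes gb gi al be :: nat
  assumes gb: "gb \<ge> 1" and gi: "gi \<ge> 1" and gb_ne_gi: "gb \<noteq> gi" and al: "al \<ge> 1" and be: "be \<ge> 1"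
    and mu_notin: "mu_root gi ^ al \<notin> even_products (mu_root gi ^ al) (mu_root gb ^ be)"
begin

definition pi_mat :: "nat \<Rightarrow> nat m2" where
  "pi_mat n = markov_code (replicate (al * n) gi @ replicate (be * n) gb)"

primrec peval :: "pterm \<Rightarrow> nat \<Rightarrow> nat" where
  "peval (Entry i) n = (if i = 0 then e00 (pi_mat n) else if i = 1 then e01 (pi_mat n)
                        else if i = 2 then e10 (pi_mat n) else e11 (pi_mat n))"
| "peval PZero n = 0"
| "peval POne n = 1"
| "peval (PAdd x y) n = peval x n + peval y n"
| "peval (PMul x y) n = peval x n * peval y n"
| "peval (PMinus x y) n = peval x n - peval y n"

definition mu_C :: real where "mu_C = mu_root gi ^ al"
definition mu_J :: real where "mu_J = mu_root gb ^ be"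
definition Gamma :: "real set" where "Gamma = even_products mu_C mu_J"

lemma mu_C_gt_1: "mu_C > 1"
  using mu_root_gt_1[OF gi] al unfolding mu_C_def by (simp add: one_less_power)

lemma mu_J_gt_1: "mu_J > 1"
  using mu_root_gt_1[OF gb] be unfolding mu_J_def by (simp add: one_less_power)

lemma Gamma_pos: "Gamma \<subseteq> {0<..}"
  using mu_C_gt_1 mu_J_gt_1 by (auto simp: Gamma_def even_products_def)

lemma one_in_Gamma: "1 \<in> Gamma"
  unfolding Gamma_def even_products_def by (intro CollectI exI[of _ 0]) simp

lemma Gamma_mult: "{x * y |x y. x \<in> Gamma \<and> y \<in> Gamma} \<subseteq> Gamma"
proof clarify
  fix x y assume "x \<in> Gamma" "y \<in> Gamma"
  then obtain s t s' t' :: int where "even (s + t)" "even (s' + t')"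
    and "x = power_int mu_C s * power_int mu_J t" "y = power_int mu_C s' * power_int mu_J t'"
    unfolding Gamma_def even_products_def by blast
  moreover have "(power_int mu_C s * power_int mu_J t) * (power_int mu_C s' * power_int mu_J t')
      = power_int mu_C (s + s') * power_int mu_J (t + t')"
    using mu_C_gt_1 mu_J_gt_1 by (simp add: power_int_add algebra_simps)
  ultimately show "x * y \<in> Gamma"
    unfolding Gamma_def even_products_def by fastforce
qed

lemma products_in_Gamma:
  "{x * y |x y. x \<in> {mu_root gi ^ al, nu_root gi ^ al} \<and> y \<in> {mu_root gb ^ be, nu_root gb ^ be}}
     \<subseteq> Gamma"
proof -
  have "nu_root gi ^ al = power_int mu_C (-1)" "nu_root gb ^ be = power_int mu_J (-1)"
    by (simp_all add: mu_C_def mu_J_def nu_root_inverse power_inverse)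
  then have "power_int mu_C s * power_int mu_J t \<in> Gamma"
    if "s \<in> {1, -1}" "t \<in> {1, -1}" for s t :: int
    using that unfolding Gamma_def even_products_def by fastforce
  from this[of 1 1] this[of 1 "-1"] this[of "-1" 1] this[of "-1" "-1"] show ?thesis
    by (auto simp: mu_C_def mu_J_def nu_root_inverse power_inverse)
qed

lemma exp_poly_pi_entries:
  "(\<lambda>n. real (e00 (pi_mat n))) \<in> exp_poly Gamma" "(\<lambda>n. real (e01 (pi_mat n))) \<in> exp_poly Gamma"
  "(\<lambda>n. real (e10 (pi_mat n))) \<in> exp_poly Gamma" "(\<lambda>n. real (e11 (pi_mat n))) \<in> exp_poly Gamma"
proof -
  note C = exp_poly_power_entries[OF gi, of al] and J = exp_poly_power_entries[OF gb, of be]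
  have sum_products: "(\<lambda>n. f1 n * g1 n + f2 n * g2 n) \<in> exp_poly Gamma"
    if "f1 \<in> exp_poly {mu_root gi ^ al, nu_root gi ^ al}" "f2 \<in> exp_poly {mu_root gi ^ al, nu_root gi ^ al}"
      "g1 \<in> exp_poly {mu_root gb ^ be, nu_root gb ^ be}" "g2 \<in> exp_poly {mu_root gb ^ be, nu_root gb ^ be}"
    for f1 f2 g1 g2
    using exp_poly_add[OF exp_poly_mult[OF that(1,3)] exp_poly_mult[OF that(2,4)]] products_in_Gamma
    by (auto intro: exp_poly_mono)
  show "(\<lambda>n. real (e00 (pi_mat n))) \<in> exp_poly Gamma"
    using sum_products[OF C(1) C(2) J(1) J(3)]
      by (simp add: pi_mat_def markov_code_append matmul_def)
  show "(\<lambda>n. real (e01 (pi_mat n))) \<in> exp_poly Gamma"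
    using sum_products[OF C(1) C(2) J(2) J(4)]
      by (simp add: pi_mat_def markov_code_append matmul_def)
  show "(\<lambda>n. real (e10 (pi_mat n))) \<in> exp_poly Gamma"
    using sum_products[OF C(3) C(4) J(1) J(3)]
      by (simp add: pi_mat_def markov_code_append matmul_def)
  show "(\<lambda>n. real (e11 (pi_mat n))) \<in> exp_poly Gamma"
    using sum_products[OF C(3) C(4) J(2) J(4)]
      by (simp add: pi_mat_def markov_code_append matmul_def)
qed

text \<open>Truncated subtraction preserves exponential polynomials eventually, because their
  differences have eventually constant sign.\<close>

lemma peval_exp_poly: "\<exists>f \<in> exp_poly Gamma. eventually (\<lambda>n. real (peval x n) = f n) sequentially"
proof (induction x)
  case (Entry i)
  have "(\<lambda>n. real (peval (Entry i) n)) \<in> exp_poly Gamma"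
    using exp_poly_pi_entries by (cases "i = 0"; cases "i = 1"; cases "i = 2") simp_all
  then show ?case by (intro bexI[where x = "\<lambda>n. real (peval (Entry i) n)"]) auto
next
  case PZero then show ?case by (intro bexI[where x = "\<lambda>n. 0"]) (simp_all add: exp_poly_zero)
next
  case POne
  have "(\<lambda>n. 1) \<in> exp_poly Gamma" using exp_poly_mono[OF _ exp_poly_const] one_in_Gamma by blast
  then show ?case by (intro bexI[where x = "\<lambda>n. 1"]) simp_all
next
  case (PAdd x y)
  then obtain f g where f: "f \<in> exp_poly Gamma" "eventually (\<lambda>n. real (peval x n) = f n) sequentially"
    and g: "g \<in> exp_poly Gamma" "eventually (\<lambda>n. real (peval y n) = g n) sequentially" by blast
  from f(2) g(2) have "eventually (\<lambda>n. real (peval (PAdd x y) n) = f n + g n) sequentially"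
    by eventually_elim simp
  with exp_poly_add[OF f(1) g(1)] show ?case by auto
next
  case (PMul x y)
  then obtain f g where f: "f \<in> exp_poly Gamma" "eventually (\<lambda>n. real (peval x n) = f n) sequentially"
    and g: "g \<in> exp_poly Gamma" "eventually (\<lambda>n. real (peval y n) = g n) sequentially" by blast
  from f(2) g(2) have "eventually (\<lambda>n. real (peval (PMul x y) n) = f n * g n) sequentially"
    by eventually_elim simp
  with exp_poly_mono[OF Gamma_mult exp_poly_mult[OF f(1) g(1)]] show ?case by auto
next
  case (PMinus x y)
  then obtain f g where f: "f \<in> exp_poly Gamma" "eventually (\<lambda>n. real (peval x n) = f n) sequentially"
    and g: "g \<in> exp_poly Gamma" "eventually (\<lambda>n. real (peval y n) = g n) sequentially" by blast
  have d: "(\<lambda>n. f n - g n) \<in> exp_poly Gamma" using exp_poly_diff[OF f(1) g(1)] by simp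
  from exp_poly_sign[OF Gamma_pos d]
  have "eventually (\<lambda>n. f n - g n \<ge> 0) sequentially \<or> eventually (\<lambda>n. f n - g n < 0) sequentially"
    by (auto elim: eventually_mono)
  then show ?case
  proof
    assume "eventually (\<lambda>n. f n - g n \<ge> 0) sequentially"
    with f(2) g(2) have "eventually (\<lambda>n. real (peval (PMinus x y) n) = f n - g n) sequentially"
      by eventually_elim (simp add: of_nat_diff)
    with d show ?case by auto
  next
    assume "eventually (\<lambda>n. f n - g n < 0) sequentially"
    with f(2) g(2) have "eventually (\<lambda>n. real (peval (PMinus x y) n) = 0) sequentially"
      by eventually_elim simp
    with exp_poly_zero[of Gamma] show ?case by fast
  qed
qed

lemma peval_trichotomy:
  "eventually (\<lambda>n. peval x n < peval y n) sequentially \<or> eventually (\<lambda>n. peval x n = peval y n) sequentially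
   \<or> eventually (\<lambda>n. peval y n < peval x n) sequentially"
proof -
  obtain f g where f: "f \<in> exp_poly Gamma" "eventually (\<lambda>n. real (peval x n) = f n) sequentially"
    and g: "g \<in> exp_poly Gamma" "eventually (\<lambda>n. real (peval y n) = g n) sequentially"
    using peval_exp_poly by meson
  have "(\<lambda>n. f n - g n) \<in> exp_poly Gamma" using exp_poly_diff[OF f(1) g(1)] by simp
  from exp_poly_sign[OF Gamma_pos this] show ?thesis
  proof (elim disjE)
    assume "\<forall>n. f n - g n = 0"
    then have "eventually (\<lambda>n. f n = g n) sequentially" by simp
    with f(2) g(2) have "eventually (\<lambda>n. peval x n = peval y n) sequentially"
      by eventually_elim simp
    then show ?thesis by blast
  next
    assume "eventually (\<lambda>n. f n - g n > 0) sequentially"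
    with f(2) g(2) have "eventually (\<lambda>n. peval y n < peval x n) sequentially"
      by eventually_elim simp
    then show ?thesis by blast
  next
    assume "eventually (\<lambda>n. f n - g n < 0) sequentially"
    with f(2) g(2) have "eventually (\<lambda>n. peval x n < peval y n) sequentially"
      by eventually_elim simp
    then show ?thesis by blast
  qed
qed

definition peq :: "pterm \<Rightarrow> pterm \<Rightarrow> bool" where
  "peq x y \<longleftrightarrow> eventually (\<lambda>n. peval x n = peval y n) sequentially"

definition pclass :: "pterm \<Rightarrow> pterm set" where
  "pclass x = {y. peq x y}"

lemma peq_trans: assumes "peq x y" "peq y z" shows "peq x z"
  using assms unfolding peq_def by eventually_elim simp

lemma peq_sym: "peq x y \<Longrightarrow> peq y x"
  unfolding peq_def by (erule eventually_mono) simp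

lemma pclass_eq_iff: "pclass x = pclass y \<longleftrightarrow> peq x y"
proof
  assume "pclass x = pclass y"
  moreover have "y \<in> pclass y" by (simp add: pclass_def peq_def)
  ultimately have "y \<in> pclass x" by simp
  then show "peq x y" by (simp add: pclass_def)
qed (auto simp: pclass_def intro: peq_trans peq_sym)

primrec pnum :: "nat \<Rightarrow> pterm" where
  "pnum 0 = PZero"
| "pnum (Suc k) = PAdd (pnum k) POne"

lemma peval_pnum [simp]: "peval (pnum k) n = k"
  by (induction k) simp_all

lemma infinite_pclasses: "infinite (range pclass)"
proof -
  have "inj (\<lambda>k. pclass (pnum k))"
    by (rule injI) (simp add: pclass_eq_iff peq_def)
  then have "infinite (range (\<lambda>k. pclass (pnum k)))" by (rule range_inj_infinite)
  then show ?thesis by (rule infinite_super[rotated]) auto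
qed

text \<open>The carrier has to be \<open>\<nat>\<close>, so the (countably many) classes of terms are enumerated.\<close>

definition enum_class :: "nat \<Rightarrow> pterm set" where
  "enum_class = from_nat_into (range pclass)"

definition elem :: "pterm \<Rightarrow> nat" where
  "elem x = inv_into UNIV enum_class (pclass x)"

definition rep :: "nat \<Rightarrow> pterm" where
  "rep i = (SOME x. pclass x = enum_class i)"

lemma bij_enum_class: "bij_betw enum_class UNIV (range pclass)"
  unfolding enum_class_def by (rule bij_betw_from_nat_into) (simp_all add: infinite_pclasses)

lemma enum_class_elem: "enum_class (elem x) = pclass x"
  using bij_enum_class unfolding elem_def bij_betw_def by (simp add: f_inv_into_f)

lemma pclass_rep: "pclass (rep i) = enum_class i"
proof -
  have "enum_class i \<in> range pclass" using bij_enum_class by (auto simp: bij_betw_def)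
  then obtain x where "pclass x = enum_class i" by auto
  then show ?thesis unfolding rep_def by (rule someI)
qed

lemma elem_rep [simp]: "elem (rep i) = i"
  using enum_class_elem[of "rep i"] pclass_rep[of i] bij_enum_class
  by (simp add: bij_betw_def inj_eq)

lemma peq_rep_elem: "peq (rep (elem x)) x"
  using pclass_rep[of "elem x"] enum_class_elem[of x] by (simp add: pclass_eq_iff)

lemma elem_eq_iff: "elem x = elem y \<longleftrightarrow> peq x y"
proof
  assume "elem x = elem y"
  then show "peq x y" using enum_class_elem pclass_eq_iff by metis
qed (simp add: elem_def pclass_eq_iff[symmetric])

definition val :: "nat \<Rightarrow> nat \<Rightarrow> nat" where
  "val i = peval (rep i)"

definition model :: "nat struc" where
  "model = \<lparr>zr = elem PZero, on = elem POne, ad = (\<lambda>i j. elem (PAdd (rep i) (rep j))),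
            mu = (\<lambda>i j. elem (PMul (rep i) (rep j))),
            lq = (\<lambda>i j. eventually (\<lambda>n. val i n \<le> val j n) sequentially)\<rparr>"

lemma val_elem: "eventually (\<lambda>n. val (elem x) n = peval x n) sequentially"
  using peq_rep_elem[of x] by (simp add: peq_def val_def)

lemma eq_iff_val: "i = j \<longleftrightarrow> eventually (\<lambda>n. val i n = val j n) sequentially"
  using elem_eq_iff[of "rep i" "rep j"] by (simp add: peq_def val_def)

lemma val_zr: "eventually (\<lambda>n. val (zr model) n = 0) sequentially"
  using val_elem[of PZero] by (simp add: model_def)

lemma val_on: "eventually (\<lambda>n. val (on model) n = 1) sequentially"
  using val_elem[of POne] by (simp add: model_def)

lemma val_ad: "eventually (\<lambda>n. val (ad model i j) n = val i n + val j n) sequentially"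
  using val_elem[of "PAdd (rep i) (rep j)"] by (simp add: model_def val_def)

lemma val_mu: "eventually (\<lambda>n. val (mu model i j) n = val i n * val j n) sequentially"
  using val_elem[of "PMul (rep i) (rep j)"] by (simp add: model_def val_def)

lemma lq_iff_val: "lq model i j \<longleftrightarrow> eventually (\<lambda>n. val i n \<le> val j n) sequentially"
  by (simp add: model_def)

lemma val_numM: "eventually (\<lambda>n. val (numM model k) n = k) sequentially"
proof (induction k)
  case (Suc k)
  show ?case using Suc val_ad[of "numM model k" "on model"] val_on by eventually_elim simp
qed (simp add: val_zr)

lemma val_trichotomy:
  "eventually (\<lambda>n. val i n < val j n) sequentially \<or> eventually (\<lambda>n. val i n = val j n) sequentially
   \<or> eventually (\<lambda>n. val j n < val i n) sequentially"
  unfolding val_def by (rule peval_trichotomy)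

subsection \<open>Transfer of universal sentences\<close>

definition env_at :: "(nat \<Rightarrow> nat) \<Rightarrow> nat \<Rightarrow> nat \<Rightarrow> nat" where
  "env_at e n = (\<lambda>v. val (e v) n)"

lemma evt_transfer: "eventually (\<lambda>n. val (evt model e t) n = evt Nstd (env_at e n) t) sequentially"
proof (induction t)
  case Zero show ?case using val_zr by (simp add: Nstd_def)
next
  case One show ?case using val_on by (simp add: Nstd_def)
next
  case (Plus s t)
  show ?case using Plus.IH val_ad[of "evt model e s" "evt model e t"]
    by eventually_elim (simp add: Nstd_def)
next
  case (Times s t)
  show ?case using Times.IH val_mu[of "evt model e s" "evt model e t"]
    by eventually_elim (simp add: Nstd_def)
qed (simp add: env_at_def)

lemma atomic_transfer:
  assumes R: "R = (=) \<or> R = (\<le>)"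
    and "eventually (\<lambda>n. val i n = x n) sequentially" "eventually (\<lambda>n. val j n = y n) sequentially"
  shows "decided (\<lambda>n. R (x n) (y n)) \<and>
    (eventually (\<lambda>n. R (val i n) (val j n)) sequentially \<longleftrightarrow> eventually (\<lambda>n. R (x n) (y n)) sequentially)"
proof -
  have eq: "eventually (\<lambda>n. R (val i n) (val j n) \<longleftrightarrow> R (x n) (y n)) sequentially"
    using assms(2,3) by eventually_elim simp
  from val_trichotomy[of i j] consider (lt) "eventually (\<lambda>n. val i n < val j n) sequentially"
    | (eq) "eventually (\<lambda>n. val i n = val j n) sequentially"
    | (gt) "eventually (\<lambda>n. val j n < val i n) sequentially"
    by blast
  then have "decided (\<lambda>n. R (val i n) (val j n))"
  proof cases
    case lt show ?thesis by (rule decided_by_mono[OF lt]) (use R in auto)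
  next
    case eq show ?thesis by (rule decided_by_mono[OF eq]) (use R in auto)
  next
    case gt show ?thesis by (rule decided_by_mono[OF gt]) (use R in auto)
  qed
  with decided_cong[OF eq] show ?thesis by simp
qed

lemma qfree_transfer:
  assumes "qfree p"
  shows "decided (\<lambda>n. sat Nstd (env_at e n) p) \<and>
    (sat model e p \<longleftrightarrow> eventually (\<lambda>n. sat Nstd (env_at e n) p) sequentially)"
proof -
  define S where "S p = (\<lambda>n. sat Nstd (env_at e n) p)" for p
  have connective: "decided (S r) \<and> (sat model e r \<longleftrightarrow> eventually (S r) sequentially)"
    if r: "S r = (\<lambda>n. f (S p n) (S q n))" "sat model e r \<longleftrightarrow> f (sat model e p) (sat model e q)"
      and p: "decided (S p)" "sat model e p \<longleftrightarrow> eventually (S p) sequentially"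
      and q: "decided (S q)" "sat model e q \<longleftrightarrow> eventually (S q) sequentially"
    for f r p q
    unfolding r using decided_combine[OF p(1) q(1), of f] p(2) q(2) by simp
  have "decided (S p) \<and> (sat model e p \<longleftrightarrow> eventually (S p) sequentially)"
    using assms
  proof (induction p)
    case (Eq s t)
    from atomic_transfer[of "(=)", OF _ evt_transfer evt_transfer] show ?case
      unfolding S_def sat.simps eq_iff_val[of "evt model e s"] by simp
  next
    case (Leq s t)
    from atomic_transfer[of "(\<le>)", OF _ evt_transfer evt_transfer] show ?case
      unfolding S_def sat.simps lq_iff_val by (simp add: Nstd_def)
  next
    case (Neg p)
    then show ?case by (intro connective[where f = "\<lambda>a b. \<not> a"]) (auto simp: S_def)
  next
    case (Conj p q)
    then show ?case by (intro connective[where f = "(\<and>)"]) (auto simp: S_def)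
  next
    case (Disj p q)
    then show ?case by (intro connective[where f = "(\<or>)"]) (auto simp: S_def)
  next
    case (Imp p q)
    then show ?case by (intro connective[where f = "(\<longrightarrow>)"]) (auto simp: S_def)
  qed simp_all
  then show ?thesis by (simp add: S_def)
qed

lemma universal_transfer: "universal p \<Longrightarrow> \<forall>e. sat Nstd e p \<Longrightarrow> sat model e p"
proof (induction p arbitrary: e rule: universal.induct)
  case (1 p)
  then show ?case using qfree_transfer[OF 1(1)] by simp
next
  case (2 p x)
  then have "\<forall>e. sat Nstd e p" by (metis fun_upd_triv sat.simps(7))
  with 2 show ?case by simp
qed

text \<open>The only axiom of \<open>PA\<^sup>-\<close> that is not universal; it is the reason for closing the model
  under truncated subtraction.\<close>

lemma lq_model_diff: "lq model x y \<Longrightarrow> \<exists>z. ad model x z = y"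
proof -
  assume "lq model x y"
  then have "eventually (\<lambda>n. val (ad model x (elem (PMinus (rep y) (rep x)))) n = val y n) sequentially"
    using val_ad[of x "elem (PMinus (rep y) (rep x))"] val_elem[of "PMinus (rep y) (rep x)"]
    unfolding lq_iff_val by eventually_elim (simp add: val_def)
  then show ?thesis unfolding eq_iff_val[symmetric] by blast
qed

lemma PAminus_model: "PAminus model"
proof -
  let ?x = "Var 0" and ?y = "Var 1" and ?z = "Var 2"
  let ?Lt = "\<lambda>a b. Conj (Leq a b) (Neg (Eq a b))"
  have U: "sat model undefined p" if "universal p" "\<forall>e. sat Nstd e p" for p
    using universal_transfer[OF that] .
  note simps = universal.intros Nstd_def lt_def
  have "\<forall>x y z. ad model (ad model x y) z = ad model x (ad model y z)"
    using U[of "All 0 (All 1 (All 2 (Eq (Plus (Plus ?x ?y) ?z) (Plus ?x (Plus ?y ?z)))))"]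
      by (simp add: simps)
  moreover have "\<forall>x y. ad model x y = ad model y x"
    using U[of "All 0 (All 1 (Eq (Plus ?x ?y) (Plus ?y ?x)))"] by (simp add: simps)
  moreover have "\<forall>x y z. mu model (mu model x y) z = mu model x (mu model y z)"
    using U[of "All 0 (All 1 (All 2 (Eq (Times (Times ?x ?y) ?z) (Times ?x (Times ?y ?z)))))"]
      by (simp add: simps)
  moreover have "\<forall>x y. mu model x y = mu model y x"
    using U[of "All 0 (All 1 (Eq (Times ?x ?y) (Times ?y ?x)))"] by (simp add: simps)
  moreover have "\<forall>x y z. mu model x (ad model y z) = ad model (mu model x y) (mu model x z)"
    using U[of "All 0 (All 1 (All 2 (Eq (Times ?x (Plus ?y ?z)) (Plus (Times ?x ?y) (Times ?x ?z)))))"]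
    by (simp add: simps distrib_left)
  moreover have "\<forall>x. ad model x (zr model) = x"
    using U[of "All 0 (Eq (Plus ?x Zero) ?x)"] by (simp add: simps)
  moreover have "\<forall>x. mu model x (zr model) = zr model"
    using U[of "All 0 (Eq (Times ?x Zero) Zero)"] by (simp add: simps)
  moreover have "\<forall>x. mu model x (on model) = x"
    using U[of "All 0 (Eq (Times ?x One) ?x)"] by (simp add: simps)
  moreover have "\<forall>x. lq model x x"
    using U[of "All 0 (Leq ?x ?x)"] by (simp add: simps)
  moreover have "\<forall>x y. lq model x y \<and> lq model y x \<longrightarrow> x = y"
    using U[of "All 0 (All 1 (Imp (Conj (Leq ?x ?y) (Leq ?y ?x)) (Eq ?x ?y)))"] by (simp add: simps)
  moreover have "\<forall>x y z. lq model x y \<and> lq model y z \<longrightarrow> lq model x z"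
  proof (intro allI impI)
    fix x y z assume "lq model x y \<and> lq model y z"
    then have "eventually (\<lambda>n. val x n \<le> val y n) sequentially"
      "eventually (\<lambda>n. val y n \<le> val z n) sequentially" by (simp_all add: lq_iff_val)
    then show "lq model x z" unfolding lq_iff_val by eventually_elim simp
  qed
  moreover have "\<forall>x y. lq model x y \<or> lq model y x"
    using U[of "All 0 (All 1 (Disj (Leq ?x ?y) (Leq ?y ?x)))"] by (simp add: simps nat_le_linear)
  moreover have "\<forall>x y z. lt model x y \<longrightarrow> lt model (ad model x z) (ad model y z)"
    using U[of "All 0 (All 1 (All 2 (Imp (?Lt ?x ?y) (?Lt (Plus ?x ?z) (Plus ?y ?z)))))"]
      by (simp add: simps)
  moreover have "\<forall>x y z. lt model (zr model) z \<and> lt model x y \<longrightarrow> lt model (mu model x z) (mu model y z)"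
    using U[of "All 0 (All 1 (All 2 (Imp (Conj (?Lt Zero ?z) (?Lt ?x ?y))
                                          (?Lt (Times ?x ?z) (Times ?y ?z)))))"]
    by (simp add: simps)
  moreover have "lt model (zr model) (on model)"
    using U[of "?Lt Zero One"] by (simp add: simps)
  moreover have "\<forall>x. lq model (zr model) x"
    using U[of "All 0 (Leq Zero ?x)"] by (simp add: simps)
  moreover have "\<forall>x. lt model (zr model) x \<longrightarrow> lq model (on model) x"
    using U[of "All 0 (Imp (?Lt Zero ?x) (Leq One ?x))"] by (simp add: simps)
  moreover have "\<forall>x y. lq model x y \<longrightarrow> (\<exists>z. ad model x z = y)"
    using lq_model_diff by blast
  ultimately show ?thesis unfolding PAminus_def by blast
qed

lemma model_T_model: "model_T model"
  unfolding model_T_def holds_def using PAminus_model universal_transfer by blast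


section \<open>Matrices in the model\<close>

definition mat_val :: "nat m2 \<Rightarrow> nat \<Rightarrow> nat m2" where
  "mat_val a n = M2 (val (e00 a) n) (val (e01 a) n) (val (e10 a) n) (val (e11 a) n)"

lemma eq_iff_eventually:
  assumes "eventually (\<lambda>n. val x n = f n) sequentially" "eventually (\<lambda>n. val y n = g n) sequentially"
  shows "x = y \<longleftrightarrow> eventually (\<lambda>n. f n = g n) sequentially"
proof -
  have "eventually (\<lambda>n. val x n = val y n \<longleftrightarrow> f n = g n) sequentially"
    using assms by eventually_elim simp
  then show ?thesis unfolding eq_iff_val[of x] by (rule eventually_subst)
qed

lemma lq_mu_iff [simp]:
  "lq model (mu model x y) (mu model z w) \<longleftrightarrow>
     eventually (\<lambda>n. val x n * val y n \<le> val z n * val w n) sequentially"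
proof -
  have "eventually (\<lambda>n. val (mu model x y) n \<le> val (mu model z w) n \<longleftrightarrow>
      val x n * val y n \<le> val z n * val w n) sequentially"
    using val_mu[of x y] val_mu[of z w] by eventually_elim simp
  then show ?thesis unfolding lq_iff_val by (rule eventually_subst)
qed

lemma val_sum_products:
  "eventually (\<lambda>n. val (ad model (mu model x y) (mu model z w)) n =
     val x n * val y n + val z n * val w n) sequentially"
  using val_ad[of "mu model x y" "mu model z w"] val_mu[of x y] val_mu[of z w]
    by eventually_elim simp

lemma sum_products_eq_iff:
  "ad model (mu model x y) (mu model z w) = c \<longleftrightarrow>
     eventually (\<lambda>n. val x n * val y n + val z n * val w n = val c n) sequentially"
  by (rule eq_iff_eventually[OF val_sum_products]) simp

lemma sl2_iff: "sl2 model a \<longleftrightarrow> eventually (\<lambda>n. unimodular (mat_val a n)) sequentially"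
proof -
  have "eventually (\<lambda>n. val (ad model (mu model (e01 a) (e10 a)) (on model)) n =
      val (e01 a) n * val (e10 a) n + 1) sequentially"
    using val_ad[of "mu model (e01 a) (e10 a)" "on model"] val_mu[of "e01 a" "e10 a"] val_on
    by eventually_elim simp
  from eq_iff_eventually[OF val_mu this] show ?thesis unfolding sl2_def
    by (simp add: unimodular_def mat_val_def)
qed

lemma mmul_iff:
  "mmul model a b = c \<longleftrightarrow> eventually (\<lambda>n. matmul (mat_val a n) (mat_val b n) = mat_val c n) sequentially"
proof -
  have "mmul model a b = c \<longleftrightarrow>
     ad model (mu model (e00 a) (e00 b)) (mu model (e01 a) (e10 b)) = e00 c \<and>
     ad model (mu model (e00 a) (e01 b)) (mu model (e01 a) (e11 b)) = e01 c \<and>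
     ad model (mu model (e10 a) (e00 b)) (mu model (e11 a) (e10 b)) = e10 c \<and>
     ad model (mu model (e10 a) (e01 b)) (mu model (e11 a) (e11 b)) = e11 c"
    by (cases c) (auto simp: mmul_def)
  also have "\<dots> \<longleftrightarrow> eventually (\<lambda>n. matmul (mat_val a n) (mat_val b n) = mat_val c n) sequentially"
    unfolding sum_products_eq_iff
      by (simp add: mat_val_def matmul_def eventually_conj_iff[symmetric])
  finally show ?thesis .
qed

lemma prec_i_iff: "prec_i model a b \<longleftrightarrow> eventually (\<lambda>n. prec_i Nstd (mat_val a n) (mat_val b n)) sequentially"
  by (simp add: prec_i_def Nstd_def mat_val_def eventually_conj_iff[symmetric])

lemma prec_e_iff: "prec_e model a b \<longleftrightarrow> eventually (\<lambda>n. prec_e Nstd (mat_val a n) (mat_val b n)) sequentially"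
  by (simp add: prec_e_def Nstd_def mat_val_def eventually_conj_iff[symmetric])

lemma mle_iff: "mle model a b \<longleftrightarrow> eventually (\<lambda>n. mle Nstd (mat_val a n) (mat_val b n)) sequentially"
  by (simp add: mle_def lq_iff_val mat_val_def Nstd_def eventually_conj_iff[symmetric])

lemma not_lq_imp:
  assumes "\<not> lq model x y" shows "eventually (\<lambda>n. val y n < val x n) sequentially"
  using val_trichotomy[of x y]
proof (elim disjE)
  assume "eventually (\<lambda>n. val x n < val y n) sequentially"
  then have "lq model x y" unfolding lq_iff_val by (rule eventually_mono) simp
  with assms show ?thesis ..
next
  assume "eventually (\<lambda>n. val x n = val y n) sequentially"
  then have "lq model x y" unfolding lq_iff_val by (rule eventually_mono) simp
  with assms show ?thesis ..
qed

lemma not_prec_e_imp: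
  assumes "\<not> prec_e model a b"
  shows "eventually (\<lambda>n. \<not> prec_e Nstd (mat_val a n) (mat_val b n)) sequentially"
proof -
  have *: "eventually (\<lambda>n. \<not> val x n * val y n \<le> val z n * val w n) sequentially"
    if "\<not> lq model (mu model x y) (mu model z w)" for x y z w
    using not_lq_imp[OF that] val_mu[of x y] val_mu[of z w] by eventually_elim simp
  from assms have "\<not> lq model (mu model (e01 b) (e10 a)) (mu model (e00 b) (e11 a))
    \<or> \<not> lq model (mu model (e00 b) (e01 a)) (mu model (e01 b) (e00 a))
    \<or> \<not> lq model (mu model (e11 b) (e10 a)) (mu model (e10 b) (e11 a))
    \<or> \<not> lq model (mu model (e10 b) (e01 a)) (mu model (e11 b) (e00 a))"
    unfolding prec_e_def by (simp del: lq_mu_iff)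
  then show ?thesis
    by (elim disjE) (drule *, erule eventually_mono, simp add: prec_e_Nstd mat_val_def)+
qed

lemma mat_val_idM: "eventually (\<lambda>n. mat_val (idM model) n = mat_I) sequentially"
  using val_on val_zr by eventually_elim (simp add: mat_val_def idM_def mat_I_def)

lemma mat_val_matB: "eventually (\<lambda>n. mat_val (matB model) n = mat_B) sequentially"
  using val_on val_zr by eventually_elim (simp add: mat_val_def matB_def mat_B_def)

lemma mat_val_brk: "eventually (\<lambda>n. mat_val (brk model x) n = markov_code [val x n]) sequentially"
  using val_on val_ad[of x "on model"]
    by eventually_elim (simp add: mat_val_def brk_def markov_code_single)

lemma mat_val_brk_numM: "eventually (\<lambda>n. mat_val (brk model (numM model k)) n = markov_code [k]) sequentially"
  using mat_val_brk[of "numM model k"] val_numM[of k] by eventually_elim simp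

lemma ur_model_imp: "ur model a \<Longrightarrow> eventually (\<lambda>n. ur Nstd (mat_val a n)) sequentially"
  unfolding ur_def[of model]
proof (elim disjE)
  assume "a = idM model"
  with mat_val_idM show ?thesis by (auto elim: eventually_mono simp: ur_Nstd)
next
  assume "prec_i model (matB model) a"
  with mat_val_matB show ?thesis
    unfolding prec_i_iff by eventually_elim (simp add: ur_def matB_Nstd)
qed

lemma ur_model_intro:
  assumes "eventually (\<lambda>n. ur Nstd (mat_val a n) \<and> mat_val a n \<noteq> mat_I) sequentially"
  shows "ur model a"
proof -
  from assms mat_val_matB
  have "eventually (\<lambda>n. prec_i Nstd (mat_val (matB model) n) (mat_val a n)) sequentially"
    by eventually_elim (auto simp: ur_def matB_Nstd idM_Nstd)
  then show ?thesis by (simp add: ur_def prec_i_iff)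
qed

lemma ur_brk: "ur model (brk model k)"
  by (rule ur_model_intro)
    (use mat_val_brk[of k] in \<open>eventually_elim, simp add: ur_markov_code markov_code_eq_I_iff\<close>)

lemma sl2_brk: "sl2 model (brk model k)"
  unfolding sl2_iff using mat_val_brk[of k] by eventually_elim (simp add: unimodular_markov_code)

definition term_mat :: "pterm \<Rightarrow> pterm \<Rightarrow> pterm \<Rightarrow> pterm \<Rightarrow> nat m2" where
  "term_mat x0 x1 x2 x3 = M2 (elem x0) (elem x1) (elem x2) (elem x3)"

lemma mat_val_term_mat:
  assumes "\<And>n. M2 (peval x0 n) (peval x1 n) (peval x2 n) (peval x3 n) = f n"
  shows "eventually (\<lambda>n. mat_val (term_mat x0 x1 x2 x3) n = f n) sequentially"
  using val_elem[of x0] val_elem[of x1] val_elem[of x2] val_elem[of x3]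
  by eventually_elim (simp add: mat_val_def term_mat_def flip: assms)

definition pi_model :: "nat m2" where
  "pi_model = term_mat (Entry 0) (Entry 1) (Entry 2) (Entry 3)"

lemma mat_val_pi_model: "eventually (\<lambda>n. mat_val pi_model n = pi_mat n) sequentially"
  unfolding pi_model_def by (rule mat_val_term_mat) (simp add: m2.expand)

definition div_block_right_model :: "nat \<Rightarrow> nat m2 \<Rightarrow> nat m2" where
  "div_block_right_model k a = term_mat
     (PMinus (PMul (rep (e00 a)) (pnum (k + 1))) (rep (e01 a)))
     (PMinus (rep (e01 a)) (PMul (pnum k) (rep (e00 a))))
     (PMinus (PMul (rep (e10 a)) (pnum (k + 1))) (rep (e11 a)))
     (PMinus (rep (e11 a)) (PMul (pnum k) (rep (e10 a))))"

lemma mat_val_div_block_right_model: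
  "eventually (\<lambda>n. mat_val (div_block_right_model k a) n = div_block_right k (mat_val a n)) sequentially"
  unfolding div_block_right_model_def
  by (rule mat_val_term_mat) (simp add: div_block_right_def mat_val_def val_def algebra_simps)

definition div_block_left_model :: "nat \<Rightarrow> nat m2 \<Rightarrow> nat m2" where
  "div_block_left_model k a = term_mat
     (PMinus (PMul (pnum (k + 1)) (rep (e00 a))) (PMul (pnum k) (rep (e10 a))))
     (PMinus (PMul (pnum (k + 1)) (rep (e01 a))) (PMul (pnum k) (rep (e11 a))))
     (PMinus (rep (e10 a)) (rep (e00 a))) (PMinus (rep (e11 a)) (rep (e01 a)))"

lemma mat_val_div_block_left_model:
  "eventually (\<lambda>n. mat_val (div_block_left_model k a) n = div_block_left k (mat_val a n)) sequentially"
  unfolding div_block_left_model_def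
  by (rule mat_val_term_mat) (simp add: div_block_left_def mat_val_def val_def algebra_simps)


section \<open>The proof of \<open>\<bottom>\<close>\<close>

lemma pi_mat_runs_code: "pi_mat n = runs_code gi (al * n) gb (be * n)"
  by (simp add: pi_mat_def runs_code_def)

lemma eventually_al_be_pos: "eventually (\<lambda>n. al * n \<ge> 1 \<and> be * n \<ge> 1) sequentially"
  using eventually_ge_at_top[of 1] by (rule eventually_mono) (use al be in simp)

lemma eq_numM_iff: "k = numM model m \<longleftrightarrow> eventually (\<lambda>n. val k n = m) sequentially"
  by (rule eq_iff_eventually[OF _ val_numM]) simp

lemma mlt_intro:
  assumes "eventually (\<lambda>n. mle Nstd (mat_val b n) (mat_val a n) \<and> mat_val b n \<noteq> mat_val a n) sequentially"
  shows "mlt model b a"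
proof -
  have "mle model b a" using assms unfolding mle_iff by (rule eventually_mono) simp
  moreover have "b \<noteq> a"
  proof
    assume "b = a"
    moreover from assms have "eventually (\<lambda>n. mat_val b n \<noteq> mat_val a n) sequentially"
      by (rule eventually_mono) simp
    ultimately show False by simp
  qed
  ultimately show ?thesis by (simp add: mlt_def)
qed

lemma occ_model_intro:
  assumes "sl2 model g" "ur model g" "sl2 model h" "ur model h" "ur model b"
    and "eventually (\<lambda>n. matmul (mat_val b n) (mat_val g n) = mat_val a n
           \<and> matmul (mat_val h n) (markov_code [val k n]) = mat_val b n
           \<and> unimodular (mat_val b n)) sequentially"
  shows "occ model b k a"
proof -
  note E = assms(6) mat_val_brk[of k]
  have "mmul model b g = a"
    unfolding mmul_iff using assms(6) by (rule eventually_mono) simp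
  moreover have "prec_i model b a"
    unfolding prec_i_iff using assms(6)
  proof eventually_elim
    case (elim n) then show ?case using prec_i_matmul[of "mat_val b n" "mat_val g n"] by simp
  qed
  moreover have "mmul model h (brk model k) = b"
    unfolding mmul_iff using E by eventually_elim simp
  moreover have "prec_e model (brk model k) b"
    unfolding prec_e_iff using E
  proof eventually_elim
    case (elim n) then show ?case
      using prec_e_matmul[OF unimodular_markov_code, of "[val k n]" "mat_val h n"] by simp
  qed
  ultimately show ?thesis
    using assms(1-5) ur_brk unfolding occ_def prec_iu_def prec_eu_def by blast
qed

lemma occ_pi_pointwise:
  assumes "occ model a k pi_model"
  shows "eventually (\<lambda>n. (val k n = gi \<or> val k n = gb) \<and>
    (val k n = gb \<longrightarrow> (\<exists>j. 1 \<le> j \<and> mat_val a n = runs_code gi (al * n) gb j))) sequentially"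
proof -
  from assms obtain g h where g: "sl2 model g" "mmul model a g = pi_model" "ur model g"
    and h: "sl2 model h" "mmul model h (brk model k) = a"
    unfolding occ_def prec_iu_def prec_eu_def by blast
  note E = g(1,2) h[unfolded sl2_iff mmul_iff] ur_model_imp[OF g(3)] mat_val_brk[of k] mat_val_pi_model
  have "eventually (\<lambda>n. unimodular (mat_val g n) \<and> ur Nstd (mat_val g n)
      \<and> matmul (mat_val a n) (mat_val g n) = runs_code gi (al * n) gb (be * n)
      \<and> unimodular (mat_val h n)
      \<and> matmul (mat_val h n) (markov_code [val k n]) = mat_val a n) sequentially"
    using E[unfolded sl2_iff mmul_iff] by eventually_elim (simp add: pi_mat_runs_code)
  then show ?thesis
    by (rule eventually_mono) (use occurrence_runs_code[OF gb_ne_gi] in blast)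
qed

lemma occ_pi_symbol:
  assumes "occ model a k pi_model" shows "k = numM model gi \<or> k = numM model gb"
proof -
  have E: "eventually (\<lambda>n. val k n = gi \<or> val k n = gb) sequentially"
    using occ_pi_pointwise[OF assms] by (rule eventually_mono) simp
  have "eventually (\<lambda>n. val k n = gb) sequentially \<or> eventually (\<lambda>n. val k n \<noteq> gb) sequentially"
    using val_trichotomy[of k "numM model gb"]
  proof (elim disjE)
    assume "eventually (\<lambda>n. val k n < val (numM model gb) n) sequentially"
    with val_numM[of gb] have "eventually (\<lambda>n. val k n \<noteq> gb) sequentially" by eventually_elim simp
    then show ?thesis ..
  next
    assume "eventually (\<lambda>n. val k n = val (numM model gb) n) sequentially"
    with val_numM[of gb] have "eventually (\<lambda>n. val k n = gb) sequentially" by eventually_elim simp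
    then show ?thesis ..
  next
    assume "eventually (\<lambda>n. val (numM model gb) n < val k n) sequentially"
    with val_numM[of gb] have "eventually (\<lambda>n. val k n \<noteq> gb) sequentially" by eventually_elim simp
    then show ?thesis ..
  qed
  then show ?thesis
  proof
    assume "eventually (\<lambda>n. val k n \<noteq> gb) sequentially"
    with E have "eventually (\<lambda>n. val k n = gi) sequentially" by eventually_elim simp
    then show ?thesis by (simp add: eq_numM_iff)
  qed (simp add: eq_numM_iff)
qed

text \<open>The lower left entry of the code of \<open>(\<bottom>\<rightarrow>\<bottom>)\<^bsup>al n\<^esup>\<close> has a term \<open>mu_C\<^sup>n\<close>, and \<open>mu_C\<close>
  is not among the bases of the exponential polynomials describing elements of the model.\<close>

lemma first_bot_not_in_model:
  "\<not> eventually (\<lambda>n. mat_val D n = markov_code (replicate (al * n) gi)) sequentially"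
proof
  assume D: "eventually (\<lambda>n. mat_val D n = markov_code (replicate (al * n) gi)) sequentially"
  obtain f where f: "f \<in> exp_poly Gamma" "eventually (\<lambda>n. real (val (e10 D) n) = f n) sequentially"
    using peval_exp_poly[of "rep (e10 D)"] unfolding val_def by blast
  define c where "c = 1 / (mu_root gi - nu_root gi)"
  have U: "lucas_U gi (al * n) = c * mu_C ^ n + (- c) * (nu_root gi ^ al) ^ n" for n
    by (simp add: lucas_U_def c_def mu_C_def power_mult diff_divide_distrib)
  from D f(2) have "eventually (\<lambda>n. f n = c * mu_C ^ n + (- c) * (nu_root gi ^ al) ^ n) sequentially"
  proof eventually_elim
    case (elim n)
    then have "val (e10 D) n = e10 (markov_code (replicate (al * n) gi))"
      by (simp add: mat_val_def flip: elim(1))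
    with elim(2) show ?case using markov_code_replicate_entries[OF gi, of "al * n"] U[of n] by simp
  qed
  moreover have "nu_root gi ^ al > 0" "nu_root gi ^ al < 1"
    using mu_root_gt_1[OF gi] al
      by (simp_all add: nu_root_inverse power_less_one_iff inverse_less_1_iff)
  moreover have "mu_C \<notin> Gamma" using mu_notin by (simp add: Gamma_def mu_C_def mu_J_def)
  ultimately have "c = 0"
    using exp_poly_eventually_eq_geometric[OF f(1) Gamma_pos, of mu_C "nu_root gi ^ al"] mu_C_gt_1
    by fastforce
  then show False using mu_root_ne_nu_root[OF gi] by (simp add: c_def)
qed

lemma bot_occurrence_shape:
  assumes "occ model a (numM model gb) pi_model"
  shows "eventually (\<lambda>n. al * n \<ge> 1 \<and> (\<exists>j \<ge> 2. mat_val a n = runs_code gi (al * n) gb j)) sequentially"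
proof -
  define D where "D = div_block_right_model gb a"
  have E: "eventually (\<lambda>n. al * n \<ge> 1 \<and> (\<exists>j \<ge> 1. mat_val a n = runs_code gi (al * n) gb j
      \<and> mat_val D n = runs_code gi (al * n) gb (j - 1))) sequentially"
    using occ_pi_pointwise[OF assms] val_numM[of gb] eventually_al_be_pos
      mat_val_div_block_right_model[of gb a]
    unfolding D_def[symmetric] by eventually_elim (auto simp: runs_code_div_block_right)
  have "prec_e model (brk model (numM model gb)) D"
  proof (rule ccontr)
    assume "\<not> ?thesis"
    from not_prec_e_imp[OF this] mat_val_brk_numM[of gb] E
    have "eventually (\<lambda>n. mat_val D n = markov_code (replicate (al * n) gi)) sequentially"
    proof eventually_elim
      case (elim n)
      then obtain j where j: "j \<ge> 1" "mat_val D n = runs_code gi (al * n) gb (j - 1)" by blast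
      have "j = 1"
      proof (rule ccontr)
        assume "j \<noteq> 1"
        then have "prec_e Nstd (markov_code [gb]) (runs_code gi (al * n) gb (j - 1))"
          using j(1) runs_code_Suc_right[of gi "al * n" gb "j - 2"]
          by (simp add: prec_e_matmul unimodular_markov_code numeral_2_eq_2 Suc_diff_Suc)
        with elim j show False by simp
      qed
      with j show ?case by (simp add: runs_code_def)
    qed
    with first_bot_not_in_model show False by blast
  qed
  with E mat_val_brk_numM[of gb] show ?thesis
    unfolding prec_e_iff
  proof eventually_elim
    case (elim n)
    then obtain j where j: "j \<ge> 1" "mat_val a n = runs_code gi (al * n) gb j"
      "mat_val D n = runs_code gi (al * n) gb (j - 1)" by blast
    with elim have "j \<noteq> 1" using not_prec_e_runs_code_0[OF gb_ne_gi] by fastforce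
    with elim j show ?case by (metis One_nat_def Suc_1 Suc_leI le_neq_implies_less)
  qed
qed

lemma ur_model_runs_code:
  assumes "eventually (\<lambda>n. \<exists>p q. (p \<ge> 1 \<or> q \<ge> 1) \<and> mat_val x n = runs_code c p b q) sequentially"
  shows "ur model x"
proof (rule ur_model_intro)
  show "eventually (\<lambda>n. ur Nstd (mat_val x n) \<and> mat_val x n \<noteq> mat_I) sequentially"
    using assms by (rule eventually_mono) (metis runs_code_ne_I runs_code_def ur_markov_code)
qed

lemma earlier_bot_occurrence:
  assumes "eventually (\<lambda>n. al * n \<ge> 1 \<and> (\<exists>j \<ge> 2. mat_val a n = runs_code gi (al * n) gb j)) sequentially"
  shows "\<exists>b. sl2 model b \<and> mlt model b a \<and> occ model b (numM model gb) a"
proof -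
  define D where "D = div_block_right_model gb a"
  define H where "H = div_block_right_model gb D"
  have E: "eventually (\<lambda>n. al * n \<ge> 1 \<and> (\<exists>j \<ge> 2. mat_val a n = runs_code gi (al * n) gb j
      \<and> mat_val D n = runs_code gi (al * n) gb (j - 1)
      \<and> mat_val H n = runs_code gi (al * n) gb (j - 2))) sequentially"
    using assms mat_val_div_block_right_model[of gb a] mat_val_div_block_right_model[of gb D]
    unfolding D_def[symmetric] H_def[symmetric]
    by eventually_elim (auto simp: runs_code_div_block_right numeral_2_eq_2)
  have "sl2 model D" "sl2 model H"
    unfolding sl2_iff using E by (auto elim!: eventually_mono simp: unimodular_runs_code)
  moreover have "ur model D" "ur model H"
    by (rule ur_model_runs_code[where c = gi and b = gb], use E in \<open>eventually_elim, blast\<close>)+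
  moreover have "mlt model D a"
  proof (rule mlt_intro)
    show "eventually (\<lambda>n. mle Nstd (mat_val D n) (mat_val a n) \<and> mat_val D n \<noteq> mat_val a n) sequentially"
      using E
    proof eventually_elim
      case (elim n)
      then obtain j where "j \<ge> 2" "mat_val a n = runs_code gi (al * n) gb j"
        "mat_val D n = runs_code gi (al * n) gb (j - 1)" by blast
      with runs_code_prefix_less[of j gi "al * n" gb] show ?case by simp
    qed
  qed
  moreover have "occ model D (numM model gb) a"
  proof (rule occ_model_intro[OF sl2_brk ur_brk \<open>sl2 model H\<close> \<open>ur model H\<close> \<open>ur model D\<close>])
    show "eventually (\<lambda>n. matmul (mat_val D n) (mat_val (brk model (numM model gb)) n) = mat_val a n
        \<and> matmul (mat_val H n) (markov_code [val (numM model gb) n]) = mat_val D n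
        \<and> unimodular (mat_val D n)) sequentially"
      using E mat_val_brk_numM[of gb] val_numM[of gb]
    proof eventually_elim
      case (elim n)
      then obtain j where j: "j \<ge> 2" "mat_val a n = runs_code gi (al * n) gb j"
        "mat_val D n = runs_code gi (al * n) gb (j - 1)" "mat_val H n = runs_code gi (al * n) gb (j - 2)"
        by blast
      moreover have
        "matmul (runs_code gi (al * n) gb (j - 2)) (markov_code [gb]) = runs_code gi (al * n) gb (j - 1)"
        using runs_code_pred[of "j - 1" gi "al * n" gb] j(1) by (simp add: numeral_2_eq_2)
      ultimately show ?case using elim(2,3) runs_code_pred[of j gi "al * n" gb]
        by (simp add: unimodular_runs_code)
    qed
  qed
  ultimately show ?thesis by blast
qed

lemma earlier_imp_occurrence:
  assumes "eventually (\<lambda>n. al * n \<ge> 1 \<and> (\<exists>j \<ge> 1. mat_val a n = runs_code gi (al * n) gb j)) sequentially"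
  shows "\<exists>c. sl2 model c \<and> mlt model c a \<and> occ model c (numM model gi) a"
proof -
  define C where "C = brk model (numM model gi)"
  define G where "G = div_block_left_model gi a"
  have E: "eventually (\<lambda>n. mat_val C n = markov_code [gi] \<and> al * n \<ge> 1 \<and> (\<exists>j \<ge> 1.
      mat_val a n = runs_code gi (al * n) gb j \<and> mat_val G n = runs_code gi (al * n - 1) gb j)) sequentially"
    using assms mat_val_div_block_left_model[of gi a] mat_val_brk_numM[of gi]
    unfolding C_def[symmetric] G_def[symmetric]
      by eventually_elim (auto simp: runs_code_div_block_left)
  have "sl2 model G" unfolding sl2_iff using E
    by (rule eventually_mono) (auto simp: unimodular_runs_code)
  moreover have "ur model G"
    by (rule ur_model_runs_code[where c = gi and b = gb], use E in \<open>eventually_elim, blast\<close>)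
  moreover have "mlt model C a"
  proof (rule mlt_intro)
    show "eventually (\<lambda>n. mle Nstd (mat_val C n) (mat_val a n) \<and> mat_val C n \<noteq> mat_val a n) sequentially"
      using E
    proof eventually_elim
      case (elim n)
      then obtain j where "j \<ge> 1" "mat_val a n = runs_code gi (al * n) gb j" by blast
      with elim block_less_runs_code[of "al * n" j gi gb] show ?case by simp
    qed
  qed
  moreover have "occ model C (numM model gi) a"
  proof (rule occ_model_intro[where g = G and h = "idM model"])
    show "sl2 model (idM model)"
      unfolding sl2_iff using mat_val_idM by (rule eventually_mono) (simp add: unimodular_I)
    show "eventually (\<lambda>n. matmul (mat_val C n) (mat_val G n) = mat_val a n
        \<and> matmul (mat_val (idM model) n) (markov_code [val (numM model gi) n]) = mat_val C n
        \<and> unimodular (mat_val C n)) sequentially"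
      using E mat_val_idM val_numM[of gi]
    proof eventually_elim
      case (elim n)
      then show ?case using runs_code_pred_left[of "al * n" gi gb]
        by (auto simp: unimodular_markov_code)
    qed
  qed (simp_all add: \<open>sl2 model G\<close> \<open>ur model G\<close> C_def ur_brk ur_def[of model "idM model"])
  ultimately show ?thesis using sl2_brk C_def by blast
qed

lemma bot_occurrence_justified:
  assumes "occ model a (numM model gb) pi_model"
  shows "\<exists>b. sl2 model b \<and> mlt model b a \<and> (\<exists>c. sl2 model c \<and> mlt model c a
           \<and> occ model b (numM model gb) a \<and> occ model c (numM model gi) a)"
proof -
  note shape = bot_occurrence_shape[OF assms]
  obtain b where "sl2 model b" "mlt model b a" "occ model b (numM model gb) a"
    using earlier_bot_occurrence[OF shape] by blast
  moreover have
    "eventually (\<lambda>n. al * n \<ge> 1 \<and> (\<exists>j \<ge> 1. mat_val a n = runs_code gi (al * n) gb j)) sequentially"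
    using shape by (rule eventually_mono) (use order_trans[OF one_le_numeral] in blast)
  then obtain c where "sl2 model c" "mlt model c a" "occ model c (numM model gi) a"
    using earlier_imp_occurrence by blast
  ultimately show ?thesis by blast
qed

lemma ur_pi_model: "ur model pi_model"
proof (rule ur_model_runs_code[where c = gi and b = gb])
  show "eventually (\<lambda>n. \<exists>p q. (p \<ge> 1 \<or> q \<ge> 1) \<and> mat_val pi_model n = runs_code gi p gb q) sequentially"
    using mat_val_pi_model eventually_al_be_pos
  proof eventually_elim
    case (elim n) then show ?case
      by (intro exI[of _ "al * n"] exI[of _ "be * n"]) (simp add: pi_mat_runs_code)
  qed
qed

lemma proof0_pi_model: "proof0 model gb gi pi_model"
  unfolding proof0_def using ur_pi_model occ_pi_symbol bot_occurrence_justified by blast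

theorem pi_proves_bot: "\<not> con_BeSh model gb gi"
proof -
  have "sl2 model pi_model"
    unfolding sl2_iff using mat_val_pi_model
      by (rule eventually_mono) (simp add: pi_mat_def unimodular_markov_code)
  moreover have "prec_e model (brk model (numM model gb)) pi_model"
    unfolding prec_e_iff using mat_val_pi_model eventually_al_be_pos mat_val_brk_numM[of gb]
  proof eventually_elim
    case (elim n)
    then show ?case using runs_code_pred[of "be * n" gi "al * n" gb]
      by (metis pi_mat_runs_code prec_e_matmul unimodular_markov_code)
  qed
  ultimately show ?thesis using proof0_pi_model by (auto simp: con_BeSh_def isproof_def)
qed

end


section \<open>Choice of the exponents\<close>

lemma power_int_gt_1_iff: "(x::real) > 1 \<Longrightarrow> power_int x n > 1 \<longleftrightarrow> n > 0"
  using power_int_strict_increasing[of 0 n x] power_int_increasing[of n 0 x] by (cases "n > 0") auto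

lemma power_int_inj: "(x::real) > 1 \<Longrightarrow> power_int x m = power_int x n \<Longrightarrow> m = n"
  using power_int_strict_increasing[of m n x] power_int_strict_increasing[of n m x]
  by (cases m n rule: linorder_cases) auto

lemma power_int_eq_imp_power_eq:
  fixes x y :: real
  assumes x: "x > 1" and y: "y > 1" and eq: "power_int x u = power_int y t" and "t \<noteq> 0"
  shows "\<exists>a b. a \<ge> 1 \<and> b \<ge> 1 \<and> x ^ a = y ^ b"
proof (cases "t > 0")
  case True
  with eq x y have "u > 0" using power_int_gt_1_iff by metis
  show ?thesis
  proof (intro exI conjI)
    show "x ^ nat u = y ^ nat t" using eq \<open>u > 0\<close> True by (simp add: power_int_def)
  qed (use \<open>u > 0\<close> True in auto)
next
  case False
  with \<open>t \<noteq> 0\<close> have "- t > 0" by simp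
  moreover from eq have "power_int x (- u) = power_int y (- t)" by (simp add: power_int_minus)
  ultimately have "- u > 0" using x y power_int_gt_1_iff by metis
  show ?thesis
  proof (intro exI conjI)
    show "x ^ nat (- u) = y ^ nat (- t)"
      using \<open>power_int x (- u) = power_int y (- t)\<close> \<open>- u > 0\<close> \<open>- t > 0\<close> by (simp add: power_int_def)
  qed (use \<open>- u > 0\<close> \<open>- t > 0\<close> in auto)
qed

text \<open>If \<open>x\<close> and \<open>y\<close> are multiplicatively dependent, both exponents make the bases equal;
  otherwise \<open>x\<close> itself already lies outside the group of even products.\<close>

lemma exponents_exist:
  fixes x y :: real
  assumes x: "x > 1" and y: "y > 1"
  shows "\<exists>a b. a \<ge> 1 \<and> b \<ge> 1 \<and> x ^ a \<notin> even_products (x ^ a) (y ^ b)"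
proof (cases "\<exists>a b. a \<ge> 1 \<and> b \<ge> 1 \<and> x ^ a = y ^ b")
  case True
  then obtain a b where ab: "a \<ge> 1" "b \<ge> 1" "x ^ a = y ^ b" by blast
  have m: "x ^ a > 1" using x ab(1) by (simp add: one_less_power)
  have "x ^ a \<notin> even_products (x ^ a) (x ^ a)"
  proof
    assume "x ^ a \<in> even_products (x ^ a) (x ^ a)"
    then obtain s t where st: "even (s + t)" "x ^ a = power_int (x ^ a) s * power_int (x ^ a) t"
      unfolding even_products_def by blast
    moreover have "power_int (x ^ a) (s + t) = power_int (x ^ a) s * power_int (x ^ a) t"
      by (rule power_int_add) (use x in simp)
    ultimately have "power_int (x ^ a) 1 = power_int (x ^ a) (s + t)" by simp
    then have "s + t = 1" using power_int_inj[OF m] by simp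
    with st(1) show False by simp
  qed
  with ab show ?thesis by metis
next
  case False
  have "x \<notin> even_products x y"
  proof
    assume "x \<in> even_products x y"
    then obtain s t where st: "even (s + t)" "x = power_int x s * power_int y t"
      by (auto simp: even_products_def)
    then have eq: "power_int x (1 - s) = power_int y t"
      using x by (simp add: power_int_diff field_simps)
    show False
    proof (cases "t = 0")
      case True
      with eq have "power_int x (1 - s) = power_int x 0" by simp
      then have "1 - s = 0" by (rule power_int_inj[OF x])
      then have "s = 1" by simp
      with True st(1) show False by simp
    next
      case False
      from power_int_eq_imp_power_eq[OF x y eq this] \<open>\<not> (\<exists>a b. _)\<close> show False by blast
    qed
  qed
  then show ?thesis by (intro exI[of _ 1]) simp
qed

theorem mainTheorem1:
  fixes gbot gimp :: nat
  assumes "0 < gbot" and "0 < gimp" and "gbot \<noteq> gimp"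
  shows "\<exists>M :: nat struc. model_T M \<and> \<not> con_BeSh M gbot gimp"
proof -
  have "gimp \<ge> 1" "gbot \<ge> 1" using assms(1,2) by simp_all
  then obtain al be where "al \<ge> 1" "be \<ge> 1"
    "mu_root gimp ^ al \<notin> even_products (mu_root gimp ^ al) (mu_root gbot ^ be)"
    using exponents_exist[OF mu_root_gt_1 mu_root_gt_1] by blast
  then interpret besh_model gbot gimp al be
    using assms by unfold_locales auto
  show ?thesis using model_T_model pi_proves_bot by blast
qed

end
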